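(* Let $G=(V,w,m)$ be a finite connected weighted graph satisfying $CD(K,\infty)$ for some $K>0$, let $D:=\operatorname{Deg}_{\max}$, let $x_0\in V$ and $f_0:=d(x_0,\cdot)$, and let $P_t=e^{t\Delta}$. The following are equivalent: (1) there is $y_0\in V$ with $d(x_0,y_0)=\frac{2D}{K}$; (2) $\operatorname{Deg}(x_0)=D$ and $\Gamma P_tf_0=e^{-2Kt}P_t\Gamma f_0$ for all $t\ge0$; (3) $\operatorname{Deg}(x_0)=D$ and $\Gamma_2 f_0=K\Gamma f_0$; (4) $\operatorname{Deg}(x_0)=D$ and $f_0=\varphi+C$ for a constant $C$ and a function $\varphi$ with $-\Delta\varphi=K\varphi$; (5) $G$ has the hypercube shell structure $HSS\left(\frac{2D}K,\frac K2,x_0\right)$.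
   Context: A weighted graph is $G=(V,w,m)$ with $V$ countable, $w:V\times V\to[0,\infty)$ symmetric with $w(x,x)=0$, $m:V\to(0,\infty)$; $x\sim y$ iff $w(x,y)>0$. Laplacian $\Delta f(x)=\frac1{m(x)}\sum_y w(x,y)(f(y)-f(x))$; $\operatorname{Deg}(x)=\frac1{m(x)}\sum_yw(x,y)$, $\operatorname{Deg}_{\max}=\max_x\operatorname{Deg}(x)$. $d$ is the combinatorial graph distance. $2\Gamma(f,g)=\Delta(fg)-f\Delta g-g\Delta f$, $2\Gamma_2(f,g)=\Delta\Gamma(f,g)-\Gamma(f,\Delta g)-\Gamma(g,\Delta f)$, $\Gamma f=\Gamma(f,f)$, $\Gamma_2f=\Gamma_2(f,f)$; $CD(K,\infty)$ means $\Gamma_2f(x)\ge K\Gamma f(x)$ for all $f$ and $x$. $d_-^{x_0}(z)=\sum_{y\sim z,\ d(y,x_0)<d(z,x_0)}\frac{w(y,z)}{m(z)}$. Hypercube shell structure $HSS(N,W,x_0)$ ($N,W>0$): (i) $\operatorname{Deg}(x)=NW$ for all $x\in V$; (ii) $G$ is bipartite; (iii) $d_-^{x_0}(x)=W\,d(x,x_0)$ for all $x\in V$. *)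

theory Defs
  imports Complex_Main
begin

text \<open>Finite weighted graphs: the vertex set is the finite type 'a (V = UNIV),
  w is the edge weight, m the vertex measure.\<close>

definition weighted_graph :: "('a::finite \<Rightarrow> 'a \<Rightarrow> real) \<Rightarrow> ('a \<Rightarrow> real) \<Rightarrow> bool" where
  "weighted_graph w m \<longleftrightarrow>
     (\<forall>x y. w x y = w y x) \<and> (\<forall>x y. 0 \<le> w x y) \<and> (\<forall>x. w x x = 0) \<and> (\<forall>x. 0 < m x)"

definition adj :: "('a \<Rightarrow> 'a \<Rightarrow> real) \<Rightarrow> 'a \<Rightarrow> 'a \<Rightarrow> bool" where
  "adj w x y \<longleftrightarrow> w x y > 0"

definition connected_graph :: "('a \<Rightarrow> 'a \<Rightarrow> real) \<Rightarrow> bool" where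
  "connected_graph w \<longleftrightarrow> (\<forall>x y. \<exists>n. (adj w ^^ n) x y)"

definition gdist :: "('a \<Rightarrow> 'a \<Rightarrow> real) \<Rightarrow> 'a \<Rightarrow> 'a \<Rightarrow> nat" where
  "gdist w x y = (LEAST n. (adj w ^^ n) x y)"

definition lap :: "('a::finite \<Rightarrow> 'a \<Rightarrow> real) \<Rightarrow> ('a \<Rightarrow> real) \<Rightarrow> ('a \<Rightarrow> real) \<Rightarrow> 'a \<Rightarrow> real" where
  "lap w m f x = (1 / m x) * (\<Sum>y\<in>UNIV. w x y * (f y - f x))"

definition Deg :: "('a::finite \<Rightarrow> 'a \<Rightarrow> real) \<Rightarrow> ('a \<Rightarrow> real) \<Rightarrow> 'a \<Rightarrow> real" where
  "Deg w m x = (1 / m x) * (\<Sum>y\<in>UNIV. w x y)"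

definition Deg_max :: "('a::finite \<Rightarrow> 'a \<Rightarrow> real) \<Rightarrow> ('a \<Rightarrow> real) \<Rightarrow> real" where
  "Deg_max w m = Max (range (Deg w m))"

definition Gam :: "('a::finite \<Rightarrow> 'a \<Rightarrow> real) \<Rightarrow> ('a \<Rightarrow> real) \<Rightarrow> ('a \<Rightarrow> real) \<Rightarrow> ('a \<Rightarrow> real) \<Rightarrow> 'a \<Rightarrow> real" where
  "Gam w m f g x = (lap w m (\<lambda>z. f z * g z) x - f x * lap w m g x - g x * lap w m f x) / 2"

definition Gam2 :: "('a::finite \<Rightarrow> 'a \<Rightarrow> real) \<Rightarrow> ('a \<Rightarrow> real) \<Rightarrow> ('a \<Rightarrow> real) \<Rightarrow> ('a \<Rightarrow> real) \<Rightarrow> 'a \<Rightarrow> real" where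
  "Gam2 w m f g x = (lap w m (Gam w m f g) x - Gam w m f (lap w m g) x - Gam w m g (lap w m f) x) / 2"

definition CD_inf :: "('a::finite \<Rightarrow> 'a \<Rightarrow> real) \<Rightarrow> ('a \<Rightarrow> real) \<Rightarrow> real \<Rightarrow> bool" where
  "CD_inf w m K \<longleftrightarrow> (\<forall>f x. Gam2 w m f f x \<ge> K * Gam w m f f x)"

definition heat :: "('a::finite \<Rightarrow> 'a \<Rightarrow> real) \<Rightarrow> ('a \<Rightarrow> real) \<Rightarrow> real \<Rightarrow> ('a \<Rightarrow> real) \<Rightarrow> 'a \<Rightarrow> real" where
  "heat w m t f x = (\<Sum>n. t ^ n / fact n * (lap w m ^^ n) f x)"

definition dminus :: "('a::finite \<Rightarrow> 'a \<Rightarrow> real) \<Rightarrow> ('a \<Rightarrow> real) \<Rightarrow> 'a \<Rightarrow> 'a \<Rightarrow> real" where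
  "dminus w m x0 z = (\<Sum>y\<in>{y. adj w y z \<and> gdist w y x0 < gdist w z x0}. w y z / m z)"

definition bipartite :: "('a \<Rightarrow> 'a \<Rightarrow> real) \<Rightarrow> bool" where
  "bipartite w \<longleftrightarrow> (\<exists>A. \<forall>x y. adj w x y \<longrightarrow> (x \<in> A \<longleftrightarrow> y \<notin> A))"

definition HSS :: "('a::finite \<Rightarrow> 'a \<Rightarrow> real) \<Rightarrow> ('a \<Rightarrow> real) \<Rightarrow> real \<Rightarrow> real \<Rightarrow> 'a \<Rightarrow> bool" where
  "HSS w m N W x0 \<longleftrightarrow>
     (\<forall>x. Deg w m x = N * W) \<and> bipartite w \<and>
     (\<forall>x. dminus w m x0 x = W * real (gdist w x x0))"

end

theory Submission
  imports Defs "HOL-Analysis.Convex"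
begin

text \<open>Under \<open>CD(K,\<infinity>)\<close> the Bakry--\'Emery gradient estimate
  \<open>\<Gamma>(P\<^sub>t f) \<le> e\<^sup>-\<^sup>2\<^sup>K\<^sup>t P\<^sub>t \<Gamma> f\<close> holds. Applied to \<open>f0 = d(x0, \<cdot>)\<close>, for which \<open>\<Gamma> f0 \<le> D/2\<close>,
  it gives \<open>|\<Delta> P\<^sub>t f0| \<le> D e\<^sup>-\<^sup>K\<^sup>t\<close>, and integrating in \<open>t\<close> yields \<open>d(x0, y) \<le> 2D/K\<close>.
  A vertex at distance exactly \<open>2D/K\<close> makes every inequality in this chain tight at \<open>x0\<close>;
  by strict positivity of the heat kernel, equality in the gradient estimate at one point
  propagates to \<open>\<Gamma>\<^sub>2 f0 = K \<Gamma> f0\<close> everywhere. Equality in \<open>CD(K,\<infinity>)\<close> makes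
  \<open>\<Delta> f0 + K f0\<close> harmonic, hence constant, so \<open>f0\<close> is a shifted eigenfunction; then \<open>\<Gamma> f0\<close>
  is subharmonic, hence constant \<open>= D/2\<close>, which forces every degree to be \<open>D\<close> and every edge
  to change the distance to \<open>x0\<close>: this is the hypercube shell structure. Conversely, under
  that structure \<open>\<Delta> f0\<close> is affine in \<open>f0\<close>, so the heat flow of \<open>f0\<close> is explicit.\<close>

lemma weighted_Cauchy_Schwarz:
  fixes p d :: "'b \<Rightarrow> real"
  assumes "\<And>y. 0 \<le> p y"
  shows "(\<Sum>y\<in>S. p y * d y)\<^sup>2 \<le> (\<Sum>y\<in>S. p y) * (\<Sum>y\<in>S. p y * (d y)\<^sup>2)"
  using Cauchy_Schwarz_ineq_sum[of "\<lambda>y. sqrt (p y)" "\<lambda>y. sqrt (p y) * d y" S] assms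
  by (simp add: power_mult_distrib mult.assoc[symmetric])

lemma linear_coeff_eq_0_if_quadratic_nonneg:
  fixes a b :: real
  assumes "\<And>e. 0 \<le> a * e + b * e\<^sup>2"
  shows "a = 0"
proof (rule ccontr)
  assume "a \<noteq> 0"
  define c where "c = \<bar>b\<bar> + 1"
  have c: "c > 0" by (simp add: c_def add_nonneg_pos)
  have "a * (- a / c) + b * (- a / c)\<^sup>2 \<le> a * (- a / c) + \<bar>b\<bar> * (- a / c)\<^sup>2"
    by (simp add: mult_right_mono)
  also have "\<dots> = (a\<^sup>2 * (\<bar>b\<bar> - c)) / c\<^sup>2"
    using c by (simp add: field_simps power2_eq_square)
  also have "\<dots> = - a\<^sup>2 / c\<^sup>2" by (simp add: c_def)
  also have "\<dots> < 0" using \<open>a \<noteq> 0\<close> c by simp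
  finally show False using assms by (meson not_le)
qed

lemma exp_neg_double: "exp (- 2 * K * t) = (exp (- K * t))\<^sup>2" for K t :: real
  by (simp add: power2_eq_square flip: exp_add)

lemma exp_neg_mult_tendsto_0:
  fixes K C :: real
  assumes "K > 0"
  shows "((\<lambda>s. C * exp (- K * s)) \<longlongrightarrow> 0) at_top"
proof -
  have "filterlim (\<lambda>s. K * s) at_top at_top"
    using assms by (intro filterlim_tendsto_pos_mult_at_top[OF tendsto_const] filterlim_ident)
  then have "filterlim (\<lambda>s. - K * s) at_bot at_top"
    by (simp add: filterlim_uminus_at_bot)
  then have "((\<lambda>s. exp (- K * s)) \<longlongrightarrow> 0) at_top"
    by (rule filterlim_compose[OF exp_at_bot])
  then show ?thesis using tendsto_mult_right_zero by blast
qed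

lemma isCont_eq_0_at_0_if_pos_eq_0:
  fixes g :: "real \<Rightarrow> real"
  assumes "isCont g 0" and "\<And>r. r > 0 \<Longrightarrow> g r = 0"
  shows "g 0 = 0"
proof -
  have "(g \<longlongrightarrow> g 0) (at_right 0)"
    using assms(1) by (simp add: isCont_def filterlim_at_split)
  moreover have "\<forall>\<^sub>F r in at_right (0::real). g r = 0"
    using eventually_at_right_less[of "0::real"] by eventually_elim (simp add: assms(2))
  then have "(g \<longlongrightarrow> 0) (at_right 0)" by (rule tendsto_eventually)
  ultimately show ?thesis by (rule tendsto_unique[OF trivial_limit_at_right_real])
qed

section \<open>Exponential series of a matrix over a finite index type\<close>

definition mat_app :: "('a::finite \<Rightarrow> 'a \<Rightarrow> real) \<Rightarrow> ('a \<Rightarrow> real) \<Rightarrow> 'a \<Rightarrow> real" where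
  "mat_app a g x = (\<Sum>y\<in>UNIV. a x y * g y)"

definition sup_norm :: "('a::finite \<Rightarrow> real) \<Rightarrow> real" where
  "sup_norm g = Max (range (\<lambda>x. \<bar>g x\<bar>))"

definition entry_norm :: "('a::finite \<Rightarrow> 'a \<Rightarrow> real) \<Rightarrow> real" where
  "entry_norm a = (\<Sum>x\<in>UNIV. \<Sum>y\<in>UNIV. \<bar>a x y\<bar>)"

definition mat_exp :: "('a::finite \<Rightarrow> 'a \<Rightarrow> real) \<Rightarrow> real \<Rightarrow> ('a \<Rightarrow> real) \<Rightarrow> 'a \<Rightarrow> real" where
  "mat_exp a t f x = (\<Sum>n. t ^ n / fact n * (mat_app a ^^ n) f x)"

lemma abs_le_sup_norm: "\<bar>g x\<bar> \<le> sup_norm g"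
  unfolding sup_norm_def by (rule Max_ge) auto

lemma sup_norm_le: "(\<And>x. \<bar>g x\<bar> \<le> c) \<Longrightarrow> sup_norm g \<le> c"
  unfolding sup_norm_def by (subst Max_le_iff) auto

lemma entry_norm_nonneg: "0 \<le> entry_norm a"
  unfolding entry_norm_def by (simp add: sum_nonneg)

lemma row_sum_le_entry_norm: "(\<Sum>y\<in>UNIV. \<bar>a x y\<bar>) \<le> entry_norm a"
  unfolding entry_norm_def by (rule member_le_sum) (auto simp: sum_nonneg)

lemma abs_mat_app_le: "\<bar>mat_app a g x\<bar> \<le> entry_norm a * sup_norm g"
proof -
  have "\<bar>mat_app a g x\<bar> \<le> (\<Sum>y\<in>UNIV. \<bar>a x y\<bar> * \<bar>g y\<bar>)"
    unfolding mat_app_def by (rule order_trans[OF sum_abs]) (simp add: abs_mult)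
  also have "\<dots> \<le> (\<Sum>y\<in>UNIV. \<bar>a x y\<bar>) * sup_norm g"
    unfolding sum_distrib_right by (rule sum_mono) (simp add: abs_le_sup_norm mult_left_mono)
  also have "\<dots> \<le> entry_norm a * sup_norm g"
    using row_sum_le_entry_norm abs_le_sup_norm[of g x] by (intro mult_right_mono) auto
  finally show ?thesis .
qed

lemma abs_mat_app_pow_le: "\<bar>(mat_app a ^^ n) g x\<bar> \<le> entry_norm a ^ n * sup_norm g"
proof -
  have "sup_norm ((mat_app a ^^ n) g) \<le> entry_norm a ^ n * sup_norm g"
  proof (induction n)
    case (Suc n)
    have "sup_norm ((mat_app a ^^ Suc n) g) \<le> entry_norm a * sup_norm ((mat_app a ^^ n) g)"
      by (rule sup_norm_le) (simp add: abs_mat_app_le)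
    also have "\<dots> \<le> entry_norm a * (entry_norm a ^ n * sup_norm g)"
      using Suc entry_norm_nonneg by (rule mult_left_mono)
    finally show ?case by simp
  qed simp
  then show ?thesis using abs_le_sup_norm order_trans by blast
qed

lemma mat_app_lin: "mat_app a (\<lambda>z. c * f z + d * g z) x = c * mat_app a f x + d * mat_app a g x"
  unfolding mat_app_def by (simp add: sum.distrib sum_distrib_left algebra_simps)

lemma mat_app_diff: "mat_app a (\<lambda>z. f z - g z) x = mat_app a f x - mat_app a g x"
  unfolding mat_app_def by (simp add: sum_subtractf algebra_simps)

lemma mat_app_pow_lin:
  "(mat_app a ^^ n) (\<lambda>z. c * f z + d * g z) = (\<lambda>x. c * (mat_app a ^^ n) f x + d * (mat_app a ^^ n) g x)"
  by (induction n) (simp_all add: mat_app_lin)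

lemma mat_app_pow_nonneg:
  assumes "\<And>x y. 0 \<le> a x y" and "\<And>z. 0 \<le> f z"
  shows "0 \<le> (mat_app a ^^ n) f x"
  by (induction n arbitrary: x) (simp_all add: assms mat_app_def sum_nonneg)

lemma summable_mat_exp: "summable (\<lambda>n. t ^ n / fact n * (mat_app a ^^ n) f x)"
proof (rule summable_comparison_test')
  show "summable (\<lambda>n. sup_norm f * (inverse (fact n) * (entry_norm a * \<bar>t\<bar>) ^ n))"
    by (rule summable_mult) (rule summable_exp)
  fix n :: nat
  have "norm (t ^ n / fact n * (mat_app a ^^ n) f x) = \<bar>t\<bar> ^ n / fact n * \<bar>(mat_app a ^^ n) f x\<bar>"
    by (simp add: abs_mult power_abs)
  also have "\<dots> \<le> \<bar>t\<bar> ^ n / fact n * (entry_norm a ^ n * sup_norm f)"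
    by (rule mult_left_mono[OF abs_mat_app_pow_le]) simp
  also have "\<dots> = sup_norm f * (inverse (fact n) * (entry_norm a * \<bar>t\<bar>) ^ n)"
    by (simp add: power_mult_distrib field_simps)
  finally show "norm (t ^ n / fact n * (mat_app a ^^ n) f x)
      \<le> sup_norm f * (inverse (fact n) * (entry_norm a * \<bar>t\<bar>) ^ n)" .
qed

lemma mat_exp_has_derivative:
  "((\<lambda>t. mat_exp a t f x) has_field_derivative mat_exp a t (mat_app a f) x) (at t)"
proof -
  define c where "c n = (mat_app a ^^ n) f x / fact n" for n
  have power_series: "mat_exp a t g x = (\<Sum>n. (mat_app a ^^ n) g x / fact n * t ^ n)" for g t
    unfolding mat_exp_def by (simp add: field_simps)
  have "diffs c n = (mat_app a ^^ n) (mat_app a f) x / fact n" for n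
  proof -
    have "(mat_app a ^^ Suc n) f x = (mat_app a ^^ n) (mat_app a f) x"
      by (simp only: funpow_Suc_right o_apply)
    moreover have "fact (Suc n) = real (Suc n) * fact n" by (simp only: fact_Suc of_nat_fact)
    ultimately show ?thesis unfolding diffs_def c_def by (simp del: of_nat_Suc fact_Suc funpow.simps)
  qed
  then have "mat_exp a t (mat_app a f) x = (\<Sum>n. diffs c n * t ^ n)"
    by (simp add: power_series)
  moreover have "(\<lambda>t. mat_exp a t f x) = (\<lambda>t. \<Sum>n. c n * t ^ n)"
    by (simp add: power_series c_def)
  moreover have "summable (\<lambda>n. c n * y ^ n)" for y
    using summable_mat_exp[of y a f x] by (simp add: c_def field_simps)
  ultimately show ?thesis by (simp add: termdiffs_strong_converges_everywhere)
qed

lemma mat_exp_mat_app: "mat_exp a t (mat_app a f) x = mat_app a (mat_exp a t f) x"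
proof -
  have "mat_app a (mat_exp a t f) x = (\<Sum>y\<in>UNIV. a x y * mat_exp a t f y)"
    by (rule mat_app_def)
  also have "\<dots> = (\<Sum>y\<in>UNIV. \<Sum>n. a x y * (t ^ n / fact n * (mat_app a ^^ n) f y))"
    unfolding mat_exp_def by (rule sum.cong[OF refl], rule suminf_mult[OF summable_mat_exp, symmetric])
  also have "\<dots> = (\<Sum>n. \<Sum>y\<in>UNIV. a x y * (t ^ n / fact n * (mat_app a ^^ n) f y))"
    by (rule suminf_sum[symmetric]) (rule summable_mult[OF summable_mat_exp])
  also have "\<dots> = (\<Sum>n. t ^ n / fact n * (mat_app a ^^ n) (mat_app a f) x)"
  proof (rule arg_cong[where f=suminf], rule ext)
    fix n
    have "(mat_app a ^^ n) (mat_app a f) = mat_app a ((mat_app a ^^ n) f)"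
      by (rule funpow_swap1[symmetric])
    then have "(mat_app a ^^ n) (mat_app a f) x = (\<Sum>y\<in>UNIV. a x y * (mat_app a ^^ n) f y)"
      by (simp only: mat_app_def)
    then show "(\<Sum>y\<in>UNIV. a x y * (t ^ n / fact n * (mat_app a ^^ n) f y))
        = t ^ n / fact n * (mat_app a ^^ n) (mat_app a f) x"
      by (simp add: sum_distrib_left algebra_simps)
  qed
  finally show ?thesis unfolding mat_exp_def by simp
qed

lemma mat_exp_0: "mat_exp a 0 f x = f x"
proof -
  have "mat_exp a 0 f x = (\<Sum>n. ((mat_app a ^^ n) f x / fact n) * 0 ^ n)"
    unfolding mat_exp_def by (simp add: field_simps)
  then show ?thesis by (subst (asm) powser_zero) simp
qed

lemma mat_exp_lin: "mat_exp a t (\<lambda>z. c * f z + d * g z) x = c * mat_exp a t f x + d * mat_exp a t g x"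
proof -
  have "mat_exp a t (\<lambda>z. c * f z + d * g z) x
      = (\<Sum>n. c * (t ^ n / fact n * (mat_app a ^^ n) f x) + d * (t ^ n / fact n * (mat_app a ^^ n) g x))"
    unfolding mat_exp_def mat_app_pow_lin
    by (rule arg_cong[where f=suminf]) (rule ext, simp add: algebra_simps)
  also have "\<dots> = (\<Sum>n. c * (t ^ n / fact n * (mat_app a ^^ n) f x))
      + (\<Sum>n. d * (t ^ n / fact n * (mat_app a ^^ n) g x))"
    by (rule suminf_add[symmetric]) (intro summable_mult summable_mat_exp)+
  also have "\<dots> = c * mat_exp a t f x + d * mat_exp a t g x"
    by (simp only: mat_exp_def suminf_mult[OF summable_mat_exp])
  finally show ?thesis .
qed

lemma mat_exp_zero: "mat_exp a t (\<lambda>z. 0) x = 0"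
proof -
  have "(mat_app a ^^ n) (\<lambda>z. 0) = (\<lambda>z. 0)" for n
    by (induction n) (simp_all add: mat_app_def)
  then show ?thesis unfolding mat_exp_def by simp
qed

lemma mat_exp_sum: "mat_exp a t (\<lambda>z. \<Sum>i\<in>S. F i z) x = (\<Sum>i\<in>S. mat_exp a t (F i) x)"
proof (induction S rule: infinite_finite_induct)
  case (insert i S)
  have "mat_exp a t (\<lambda>z. \<Sum>i\<in>insert i S. F i z) x
      = mat_exp a t (\<lambda>z. 1 * F i z + 1 * (\<Sum>i\<in>S. F i z)) x"
    using insert by simp
  also have "\<dots> = mat_exp a t (F i) x + mat_exp a t (\<lambda>z. \<Sum>i\<in>S. F i z) x"
    using mat_exp_lin[of a t 1 "F i" 1 "\<lambda>z. \<Sum>i\<in>S. F i z" x] by simp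
  finally show ?case using insert by simp
qed (simp_all add: mat_exp_zero)

lemma mat_exp_kernel: "mat_exp a t g x = (\<Sum>y\<in>UNIV. g y * mat_exp a t (\<lambda>z. if z = y then 1 else 0) x)"
proof -
  have "g = (\<lambda>z. \<Sum>y\<in>UNIV. g y * (if z = y then 1 else 0))"
    by (simp add: if_distrib cong: if_cong)
  then have "mat_exp a t g x = (\<Sum>y\<in>UNIV. mat_exp a t (\<lambda>z. g y * (if z = y then 1 else 0)) x)"
    by (simp only: mat_exp_sum[symmetric])
  also have "\<dots> = (\<Sum>y\<in>UNIV. g y * mat_exp a t (\<lambda>z. if z = y then 1 else 0) x)"
  proof (rule sum.cong[OF refl])
    fix y
    show "mat_exp a t (\<lambda>z. g y * (if z = y then 1 else 0)) x
        = g y * mat_exp a t (\<lambda>z. if z = y then 1 else 0) x"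
      using mat_exp_lin[of a t "g y" "\<lambda>z. if z = y then 1 else 0" 0 "\<lambda>z. 0" x]
      by (simp add: mat_exp_zero)
  qed
  finally show ?thesis .
qed

lemma mat_exp_nonneg:
  assumes "\<And>x y. 0 \<le> a x y" and "\<And>z. 0 \<le> f z" and "0 \<le> t"
  shows "0 \<le> mat_exp a t f x"
proof -
  have "0 \<le> (mat_app a ^^ n) f x" for n by (rule mat_app_pow_nonneg) (use assms in auto)
  then show ?thesis unfolding mat_exp_def using assms(3)
    by (intro suminf_nonneg summable_mat_exp) simp
qed

lemma sum_mul_mat_app_le: "(\<Sum>x\<in>UNIV. h x * mat_app a h x) \<le> entry_norm a * (\<Sum>x\<in>UNIV. (h x)\<^sup>2)"
proof -
  define E where "E = (\<Sum>x\<in>UNIV. (h x)\<^sup>2)"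
  have hE: "(h x)\<^sup>2 \<le> E" for x
    unfolding E_def by (rule member_le_sum) auto
  have "a x y * (h x * h y) \<le> \<bar>a x y\<bar> * E" for x y
  proof -
    have "\<bar>h x\<bar> * \<bar>h y\<bar> \<le> E"
      using hE[of x] hE[of y]
      by (metis (no_types, lifting) abs_ge_zero abs_mult_self_eq dual_order.trans
          linorder_le_cases mult_left_mono mult_right_mono power2_eq_square)
    then show ?thesis
      by (metis abs_ge_self abs_ge_zero abs_mult mult_left_mono order_trans)
  qed
  then have "(\<Sum>x\<in>UNIV. h x * mat_app a h x) \<le> (\<Sum>x\<in>UNIV. \<Sum>y\<in>UNIV. \<bar>a x y\<bar> * E)"
    unfolding mat_app_def sum_distrib_left by (intro sum_mono) (simp add: algebra_simps)
  also have "\<dots> = entry_norm a * E" unfolding entry_norm_def by (simp add: sum_distrib_right)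
  finally show ?thesis unfolding E_def .
qed

lemma sum_sq_has_derivative:
  assumes "\<And>x. ((\<lambda>s. h s x) has_field_derivative h' x) (at s)"
  shows "((\<lambda>s. \<Sum>x\<in>UNIV. (h s x)\<^sup>2) has_field_derivative (\<Sum>x\<in>UNIV. 2 * h s x * h' x)) (at s)"
proof (rule DERIV_sum)
  fix x
  have "((\<lambda>s. h s x * h s x) has_field_derivative h' x * h s x + h' x * h s x) (at s)"
    by (rule DERIV_mult[OF assms assms])
  then show "((\<lambda>s. (h s x)\<^sup>2) has_field_derivative 2 * h s x * h' x) (at s)"
    by (simp add: power2_eq_square algebra_simps)
qed

text \<open>Uniqueness for the linear system \<open>u' = a u\<close> forward in time: the energy
  \<open>\<Sum>x. (u t x - v t x)\<^sup>2\<close> times \<open>exp (- 2 * entry_norm a * t)\<close> is non-increasing.\<close>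
lemma mat_ode_unique:
  fixes u v :: "real \<Rightarrow> 'a::finite \<Rightarrow> real"
  assumes du: "\<And>s x. ((\<lambda>s. u s x) has_field_derivative mat_app a (u s) x) (at s)"
    and dv: "\<And>s x. ((\<lambda>s. v s x) has_field_derivative mat_app a (v s) x) (at s)"
    and init: "\<And>x. u 0 x = v 0 x" and "t \<ge> 0"
  shows "u t x = v t x"
proof -
  define h where "h s x = u s x - v s x" for s x
  define c where "c = 2 * entry_norm a"
  define E where "E s = (\<Sum>x\<in>UNIV. (h s x)\<^sup>2)" for s
  define F where "F s = E s * exp (- c * s)" for s
  have dh: "((\<lambda>s. h s x) has_field_derivative mat_app a (h s) x) (at s)" for s x
    unfolding h_def mat_app_diff by (rule DERIV_diff[OF du dv])
  have dE: "(E has_field_derivative (\<Sum>x\<in>UNIV. 2 * h s x * mat_app a (h s) x)) (at s)" for s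
    unfolding E_def[abs_def] by (rule sum_sq_has_derivative[OF dh])
  have "F t \<le> F 0"
  proof (rule DERIV_nonpos_imp_nonincreasing[OF \<open>t \<ge> 0\<close>])
    fix s
    have "(\<Sum>x\<in>UNIV. 2 * h s x * mat_app a (h s) x) = 2 * (\<Sum>x\<in>UNIV. h s x * mat_app a (h s) x)"
      by (simp add: sum_distrib_left mult.assoc)
    also have "\<dots> \<le> c * E s"
      unfolding c_def E_def using sum_mul_mat_app_le[of "h s" a] by simp
    finally have "(\<Sum>x\<in>UNIV. 2 * h s x * mat_app a (h s) x) \<le> c * E s" .
    then have "(\<Sum>x\<in>UNIV. 2 * h s x * mat_app a (h s) x) * exp (- c * s) - c * E s * exp (- c * s) \<le> 0"
      by (simp add: mult_right_mono algebra_simps)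
    moreover have "(F has_field_derivative
        (\<Sum>x\<in>UNIV. 2 * h s x * mat_app a (h s) x) * exp (- c * s) - c * E s * exp (- c * s)) (at s)"
      unfolding F_def by (rule derivative_eq_intros dE refl | simp)+
    ultimately show "\<exists>y. (F has_real_derivative y) (at s) \<and> y \<le> 0" by blast
  qed
  moreover have "F 0 = 0" unfolding F_def E_def h_def using init by simp
  moreover have "0 \<le> F t" unfolding F_def E_def by (simp add: sum_nonneg)
  ultimately have "E t = 0" unfolding F_def by simp
  then have "(h t x)\<^sup>2 = 0" unfolding E_def by (simp add: sum_nonneg_eq_0_iff)
  then show ?thesis unfolding h_def by simp
qed

section \<open>Calculus on a weighted graph\<close>

locale wgraph =
  fixes w :: "'a::finite \<Rightarrow> 'a \<Rightarrow> real" and m :: "'a \<Rightarrow> real"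
  assumes weighted_graph: "weighted_graph w m"
begin

lemma w_sym: "w x y = w y x" and w_nonneg: "0 \<le> w x y" and w_self: "w x x = 0" and m_pos: "0 < m x"
  using weighted_graph unfolding weighted_graph_def by auto

lemma adj_sym: "adj w x y \<longleftrightarrow> adj w y x"
  unfolding adj_def using w_sym by simp

lemma adj_imp_neq: "adj w x y \<Longrightarrow> x \<noteq> y"
  using w_self unfolding adj_def by auto

lemma adj_if_w_neq_0: "w x y \<noteq> 0 \<Longrightarrow> adj w x y"
  using w_nonneg[of x y] unfolding adj_def by simp

lemma Deg_altdef: "Deg w m x = (\<Sum>y\<in>UNIV. w x y) / m x"
  by (simp add: Deg_def)

lemma Deg_nonneg: "0 \<le> Deg w m x"
  unfolding Deg_altdef using m_pos w_nonneg by (simp add: sum_nonneg less_imp_le)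

lemma Deg_le_Deg_max: "Deg w m x \<le> Deg_max w m"
  unfolding Deg_max_def by (rule Max_ge) auto

lemma Deg_max_nonneg: "0 \<le> Deg_max w m"
  using Deg_nonneg Deg_le_Deg_max order_trans by blast

lemma lap_altdef: "lap w m f x = (\<Sum>y\<in>UNIV. w x y * (f y - f x)) / m x"
  by (simp add: lap_def)

lemma m_mult_lap: "m x * lap w m g x = (\<Sum>y\<in>UNIV. w x y * (g y - g x))"
  using m_pos[of x] by (simp add: lap_altdef)

lemma Gam_altdef: "Gam w m f g x = (\<Sum>y\<in>UNIV. w x y * (f y - f x) * (g y - g x)) / (2 * m x)"
proof -
  have "lap w m (\<lambda>z. f z * g z) x - f x * lap w m g x - g x * lap w m f x
      = (\<Sum>y\<in>UNIV. w x y * (f y * g y - f x * g x) - f x * (w x y * (g y - g x))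
          - g x * (w x y * (f y - f x))) / m x"
    unfolding lap_altdef by (simp add: sum_subtractf sum_distrib_left diff_divide_distrib)
  also have "\<dots> = (\<Sum>y\<in>UNIV. w x y * (f y - f x) * (g y - g x)) / m x"
    by (rule arg_cong[where f="\<lambda>s. s / m x"], rule sum.cong) (auto simp: algebra_simps)
  finally show ?thesis unfolding Gam_def by simp
qed

lemma lap_add: "lap w m (\<lambda>z. f z + g z) x = lap w m f x + lap w m g x"
  unfolding lap_altdef add_divide_distrib[symmetric] sum.distrib[symmetric]
  by (rule arg_cong[where f="\<lambda>s. s / m x"], rule sum.cong) (auto simp: algebra_simps)

lemma lap_cmult: "lap w m (\<lambda>z. c * f z) x = c * lap w m f x"
  by (simp add: lap_altdef sum_distrib_left algebra_simps)

lemma lap_const: "lap w m (\<lambda>z. c) x = 0"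
  by (simp add: lap_altdef)

lemma lap_add_const: "lap w m (\<lambda>z. f z + c) x = lap w m f x"
  by (simp add: lap_altdef)

lemma lap_sum: "lap w m (\<lambda>z. \<Sum>i\<in>S. F i z) x = (\<Sum>i\<in>S. lap w m (F i) x)"
  by (induction S rule: infinite_finite_induct) (simp_all add: lap_const lap_add)

lemma lap_kernel: "lap w m g z = (\<Sum>y\<in>UNIV. g y * lap w m (\<lambda>u. if u = y then 1 else 0) z)"
proof -
  have "g = (\<lambda>u. \<Sum>y\<in>UNIV. g y * (if u = y then 1 else 0))"
    by (simp add: if_distrib cong: if_cong)
  then have "lap w m g z = lap w m (\<lambda>u. \<Sum>y\<in>UNIV. g y * (if u = y then 1 else 0)) z" by simp
  then show ?thesis by (simp only: lap_sum lap_cmult)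
qed

lemma Gam_commute: "Gam w m f g x = Gam w m g f x"
  by (simp add: Gam_altdef algebra_simps)

lemma Gam_add: "Gam w m (\<lambda>z. f z + g z) h x = Gam w m f h x + Gam w m g h x"
  unfolding Gam_altdef add_divide_distrib[symmetric] sum.distrib[symmetric]
  by (rule arg_cong[where f="\<lambda>s. s / (2 * m x)"], rule sum.cong) (auto simp: algebra_simps)

lemma Gam_cmult: "Gam w m (\<lambda>z. c * f z) h x = c * Gam w m f h x"
  by (simp add: Gam_altdef sum_distrib_left algebra_simps)

lemma Gam_add_const: "Gam w m (\<lambda>z. f z + c) h x = Gam w m f h x"
  by (simp add: Gam_altdef)

lemma Gam_add_right: "Gam w m h (\<lambda>z. f z + g z) x = Gam w m h f x + Gam w m h g x"
  by (simp add: Gam_commute[of h] Gam_add)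

lemma Gam_cmult_right: "Gam w m h (\<lambda>z. c * f z) x = c * Gam w m h f x"
  by (simp add: Gam_commute[of h] Gam_cmult)

lemma Gam_add_const_right: "Gam w m h (\<lambda>z. f z + c) x = Gam w m h f x"
  by (simp add: Gam_altdef)

lemma Gam_self_nonneg: "0 \<le> Gam w m f f x"
  unfolding Gam_altdef using m_pos w_nonneg
  by (intro divide_nonneg_pos sum_nonneg) (auto simp: mult.assoc)

lemma lap_sq_le_Deg_Gam: "(lap w m g x)\<^sup>2 \<le> 2 * Deg w m x * Gam w m g g x"
proof -
  have "(\<Sum>y\<in>UNIV. w x y * (g y - g x))\<^sup>2 \<le> (\<Sum>y\<in>UNIV. w x y) * (\<Sum>y\<in>UNIV. w x y * (g y - g x)\<^sup>2)"
    by (rule weighted_Cauchy_Schwarz) (rule w_nonneg)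
  moreover have "(lap w m g x)\<^sup>2 = (\<Sum>y\<in>UNIV. w x y * (g y - g x))\<^sup>2 / (m x)\<^sup>2"
    by (simp add: lap_altdef power_divide)
  moreover have "2 * Deg w m x * Gam w m g g x
      = (\<Sum>y\<in>UNIV. w x y) * (\<Sum>y\<in>UNIV. w x y * (g y - g x)\<^sup>2) / (m x)\<^sup>2"
    using m_pos[of x] unfolding Deg_altdef Gam_altdef by (simp add: power2_eq_square mult.assoc)
  ultimately show ?thesis using m_pos[of x] by (simp add: divide_right_mono)
qed

lemma w_mult_diff_sq_le_Gam: "w x y * (g y - g x)\<^sup>2 \<le> 2 * m x * Gam w m g g x"
proof -
  have "w x y * (g y - g x)\<^sup>2 \<le> (\<Sum>u\<in>UNIV. w x u * (g u - g x) * (g u - g x))"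
    using member_le_sum[of y UNIV "\<lambda>u. w x u * (g u - g x) * (g u - g x)"] w_nonneg
    by (simp add: power2_eq_square mult.assoc)
  also have "\<dots> = 2 * m x * Gam w m g g x"
    using m_pos[of x] by (simp add: Gam_altdef)
  finally show ?thesis .
qed

lemma Deg_max_eq_0_imp_lap_eq_0:
  assumes "Deg_max w m = 0"
  shows "lap w m g x = 0"
proof -
  have "w x y = 0" for x y
  proof -
    have "Deg w m x = 0" using Deg_le_Deg_max[of x] Deg_nonneg[of x] assms by simp
    then have "(\<Sum>y\<in>UNIV. w x y) = 0" using m_pos[of x] by (simp add: Deg_altdef)
    then show ?thesis using w_nonneg by (simp add: sum_nonneg_eq_0_iff)
  qed
  then show ?thesis by (simp add: lap_altdef)
qed

lemma sum_m_lap: "(\<Sum>x\<in>UNIV. m x * lap w m g x) = 0"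
proof -
  have "(\<Sum>x\<in>UNIV. m x * lap w m g x)
      = (\<Sum>x\<in>UNIV. \<Sum>y\<in>UNIV. w x y * g y) - (\<Sum>x\<in>UNIV. \<Sum>y\<in>UNIV. w x y * g x)"
    by (simp add: m_mult_lap sum_subtractf algebra_simps)
  also have "(\<Sum>x\<in>UNIV. \<Sum>y\<in>UNIV. w x y * g y) = (\<Sum>x\<in>UNIV. \<Sum>y\<in>UNIV. w x y * g x)"
    by (subst sum.swap) (rule sum.cong[OF refl], rule sum.cong[OF refl], simp add: w_sym)
  finally show ?thesis by simp
qed

lemma sum_m_Gam: "(\<Sum>x\<in>UNIV. m x * Gam w m f g x) = - (\<Sum>x\<in>UNIV. m x * f x * lap w m g x)"
proof -
  have "(\<Sum>x\<in>UNIV. m x * Gam w m f g x)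
      = (\<Sum>x\<in>UNIV. \<Sum>y\<in>UNIV. w x y * (f y - f x) * (g y - g x)) / 2"
    using m_pos by (simp add: Gam_altdef sum_divide_distrib[symmetric] less_imp_neq[symmetric])
  also have "(\<Sum>x\<in>UNIV. \<Sum>y\<in>UNIV. w x y * (f y - f x) * (g y - g x))
      = (\<Sum>x\<in>UNIV. \<Sum>y\<in>UNIV. w x y * f y * (g y - g x))
        - (\<Sum>x\<in>UNIV. \<Sum>y\<in>UNIV. w x y * f x * (g y - g x))"
    unfolding sum_subtractf[symmetric]
    by (rule sum.cong[OF refl], rule sum.cong[OF refl]) (simp add: algebra_simps)
  also have "(\<Sum>x\<in>UNIV. \<Sum>y\<in>UNIV. w x y * f y * (g y - g x))
      = - (\<Sum>x\<in>UNIV. \<Sum>y\<in>UNIV. w x y * f x * (g y - g x))"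
    by (subst sum.swap) (simp add: sum_negf[symmetric], rule sum.cong[OF refl],
        rule sum.cong[OF refl], simp add: w_sym algebra_simps)
  also have "(\<Sum>x\<in>UNIV. \<Sum>y\<in>UNIV. w x y * f x * (g y - g x)) = (\<Sum>x\<in>UNIV. m x * f x * lap w m g x)"
    by (rule sum.cong[OF refl]) (simp add: mult.assoc m_mult_lap sum_distrib_left algebra_simps)
  finally show ?thesis by simp
qed

lemma lap_self_adjoint: "(\<Sum>x\<in>UNIV. m x * f x * lap w m g x) = (\<Sum>x\<in>UNIV. m x * g x * lap w m f x)"
  using sum_m_Gam[of f g] sum_m_Gam[of g f] Gam_commute[of f g] by simp

lemma lap_eq_0_if_nonneg:
  assumes "\<And>x. 0 \<le> lap w m g x"
  shows "lap w m g x = 0"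
proof -
  have "\<forall>x\<in>UNIV. 0 \<le> m x * lap w m g x" using assms m_pos by (simp add: less_imp_le)
  then have "m x * lap w m g x = 0" using sum_m_lap[of g] by (simp add: sum_nonneg_eq_0_iff)
  then show ?thesis using m_pos[of x] by simp
qed

lemma Gam2_add_mult:
  "Gam2 w m (\<lambda>z. f z + e * h z) (\<lambda>z. f z + e * h z) x
   = Gam2 w m f f x + 2 * e * Gam2 w m f h x + e\<^sup>2 * Gam2 w m h h x"
proof -
  define F where "F = (\<lambda>z. f z + e * h z)"
  have "Gam w m F F = (\<lambda>y. Gam w m f f y + (2*e) * Gam w m f h y + e\<^sup>2 * Gam w m h h y)"
    by (rule ext) (simp add: F_def Gam_add Gam_cmult Gam_add_right Gam_cmult_right Gam_commute[of h f]
        power2_eq_square algebra_simps)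
  then have 1: "lap w m (Gam w m F F) x = lap w m (Gam w m f f) x + (2*e) * lap w m (Gam w m f h) x
      + e\<^sup>2 * lap w m (Gam w m h h) x"
    by (simp add: lap_add lap_cmult)
  have "lap w m F = (\<lambda>y. lap w m f y + e * lap w m h y)"
    by (rule ext) (simp add: F_def lap_add lap_cmult)
  then have 2: "Gam w m F (lap w m F) x = Gam w m f (lap w m f) x + e * Gam w m f (lap w m h) x
        + e * Gam w m h (lap w m f) x + e\<^sup>2 * Gam w m h (lap w m h) x"
    by (simp add: F_def Gam_add Gam_cmult Gam_add_right Gam_cmult_right power2_eq_square algebra_simps)
  show ?thesis unfolding F_def[symmetric] Gam2_def 1 2 by (simp add: field_simps)
qed

text \<open>A minimiser of the quadratic form \<open>\<Gamma>\<^sub>2 - K \<Gamma> \<ge> 0\<close> annihilates the associated bilinear form.\<close>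
lemma CD_equality_imp_bilinear_equality:
  assumes "CD_inf w m K" and "Gam2 w m f f x = K * Gam w m f f x"
  shows "Gam2 w m f h x = K * Gam w m f h x"
proof -
  have "0 \<le> (2 * (Gam2 w m f h x - K * Gam w m f h x)) * e + (Gam2 w m h h x - K * Gam w m h h x) * e\<^sup>2" for e
  proof -
    have "K * Gam w m (\<lambda>z. f z + e * h z) (\<lambda>z. f z + e * h z) x
        \<le> Gam2 w m (\<lambda>z. f z + e * h z) (\<lambda>z. f z + e * h z) x"
      using assms(1) unfolding CD_inf_def by blast
    moreover have "Gam w m (\<lambda>z. f z + e * h z) (\<lambda>z. f z + e * h z) x
        = Gam w m f f x + 2 * e * Gam w m f h x + e\<^sup>2 * Gam w m h h x"
      by (simp add: Gam_add Gam_cmult Gam_add_right Gam_cmult_right Gam_commute[of h f]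
          power2_eq_square algebra_simps)
    ultimately show ?thesis using assms(2) unfolding Gam2_add_mult by (simp add: algebra_simps)
  qed
  then show ?thesis using linear_coeff_eq_0_if_quadratic_nonneg by fastforce
qed

lemma CD_equality_imp_lap_lap:
  assumes "CD_inf w m K" and "\<And>x. Gam2 w m f f x = K * Gam w m f f x"
  shows "lap w m (\<lambda>z. lap w m f z + K * f z) x = 0"
proof -
  have "(\<Sum>x\<in>UNIV. m x * h x * (lap w m (lap w m f) x + K * lap w m f x)) = 0" for h
  proof -
    have "m x * (2 * Gam2 w m f h x) = m x * lap w m (Gam w m f h) x
        - m x * Gam w m (lap w m h) f x - m x * Gam w m (lap w m f) h x" for x
      by (simp add: Gam2_def Gam_commute[of f "lap w m h"] Gam_commute[of h "lap w m f"] field_simps)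
    then have "(\<Sum>x\<in>UNIV. m x * (2 * Gam2 w m f h x))
        = (\<Sum>x\<in>UNIV. m x * lap w m (Gam w m f h) x) - (\<Sum>x\<in>UNIV. m x * Gam w m (lap w m h) f x)
          - (\<Sum>x\<in>UNIV. m x * Gam w m (lap w m f) h x)"
      by (simp add: sum_subtractf)
    also have "\<dots> = 2 * (\<Sum>x\<in>UNIV. m x * lap w m f x * lap w m h x)"
      unfolding sum_m_lap sum_m_Gam by (simp add: algebra_simps)
    also have "\<dots> = 2 * (\<Sum>x\<in>UNIV. m x * h x * lap w m (lap w m f) x)"
      using lap_self_adjoint[of "lap w m f" h] by simp
    finally have "(\<Sum>x\<in>UNIV. m x * (2 * Gam2 w m f h x)) = 2 * (\<Sum>x\<in>UNIV. m x * h x * lap w m (lap w m f) x)" .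
    moreover have "(\<Sum>x\<in>UNIV. m x * (2 * Gam2 w m f h x)) = 2 * K * (\<Sum>x\<in>UNIV. m x * Gam w m h f x)"
      using CD_equality_imp_bilinear_equality[OF assms(1,2)]
      by (simp add: Gam_commute[of f] sum_distrib_left algebra_simps)
    ultimately have "(\<Sum>x\<in>UNIV. m x * h x * lap w m (lap w m f) x)
        + K * (\<Sum>x\<in>UNIV. m x * h x * lap w m f x) = 0"
      using sum_m_Gam[of h f] by simp
    then show ?thesis by (simp add: sum_distrib_left algebra_simps sum.distrib)
  qed
  from this[of "\<lambda>y. if y = x then 1 else 0"]
  have "m x * (lap w m (lap w m f) x + K * lap w m f x) = 0"
    by (simp add: if_distrib[of "\<lambda>c. m _ * c * _"] cong: if_cong)
  then show ?thesis using m_pos[of x] by (simp add: lap_add lap_cmult)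
qed

end

section \<open>The heat semigroup\<close>

context wgraph
begin

definition lap_matrix :: "'a \<Rightarrow> 'a \<Rightarrow> real" where
  "lap_matrix x y = w x y / m x - (if x = y then Deg w m x else 0)"

text \<open>Adding \<open>Deg_max\<close> on the diagonal makes all entries non-negative; this is the
  source of positivity of the heat semigroup.\<close>
definition shifted_lap_matrix :: "'a \<Rightarrow> 'a \<Rightarrow> real" where
  "shifted_lap_matrix x y = lap_matrix x y + (if x = y then Deg_max w m else 0)"

lemma lap_eq_mat_app: "lap w m = mat_app lap_matrix"
proof (intro ext)
  fix g x
  have "mat_app lap_matrix g x
      = (\<Sum>y\<in>UNIV. w x y * g y / m x - (if x = y then Deg w m x * g y else 0))"
    unfolding mat_app_def lap_matrix_def by (rule sum.cong) (auto simp: algebra_simps)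
  also have "\<dots> = (\<Sum>y\<in>UNIV. w x y * g y) / m x - Deg w m x * g x"
    by (simp add: sum_subtractf sum_divide_distrib)
  also have "\<dots> = lap w m g x"
    unfolding lap_altdef Deg_altdef
    by (simp add: sum_subtractf diff_divide_distrib sum_distrib_right sum_distrib_left algebra_simps)
  finally show "lap w m g x = mat_app lap_matrix g x" by simp
qed

lemma heat_eq_mat_exp: "heat w m t f x = mat_exp lap_matrix t f x"
  unfolding heat_def mat_exp_def lap_eq_mat_app ..

lemma heat_has_derivative: "((\<lambda>t. heat w m t f x) has_field_derivative heat w m t (lap w m f) x) (at t)"
  unfolding heat_eq_mat_exp lap_eq_mat_app by (rule mat_exp_has_derivative)

lemma heat_lap: "heat w m t (lap w m f) x = lap w m (heat w m t f) x"
  unfolding heat_eq_mat_exp[abs_def] lap_eq_mat_app by (simp add: mat_exp_mat_app)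

lemma heat_0: "heat w m 0 f = f"
  by (rule ext) (simp add: heat_eq_mat_exp mat_exp_0)

lemma heat_lin: "heat w m t (\<lambda>z. c * f z + d * g z) x = c * heat w m t f x + d * heat w m t g x"
  unfolding heat_eq_mat_exp by (rule mat_exp_lin)

lemma heat_diff: "heat w m t (\<lambda>z. f z - g z) x = heat w m t f x - heat w m t g x"
  using heat_lin[of t 1 f "-1" g x] by simp

lemma heat_kernel: "heat w m t g x = (\<Sum>y\<in>UNIV. g y * heat w m t (\<lambda>z. if z = y then 1 else 0) x)"
  unfolding heat_eq_mat_exp by (rule mat_exp_kernel)

lemma heat_eigenfunction:
  assumes "\<And>x. lap w m \<phi> x = \<mu> * \<phi> x"
  shows "heat w m t \<phi> x = exp (\<mu> * t) * \<phi> x"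
proof -
  have "(lap w m ^^ n) \<phi> = (\<lambda>x. \<mu> ^ n * \<phi> x)" for n
  proof (induction n)
    case (Suc n)
    have "lap w m (\<lambda>x. \<mu> ^ n * \<phi> x) = (\<lambda>x. \<mu> ^ Suc n * \<phi> x)"
      by (intro ext) (simp add: lap_cmult assms)
    then show ?case using Suc by simp
  qed simp
  then have "(\<lambda>n. t ^ n / fact n * (lap w m ^^ n) \<phi> x) = (\<lambda>n. \<phi> x * ((\<mu> * t) ^ n /\<^sub>R fact n))"
    by (auto simp: power_mult_distrib field_simps)
  moreover have "(\<lambda>n. \<phi> x * ((\<mu> * t) ^ n /\<^sub>R fact n)) sums (\<phi> x * exp (\<mu> * t))"
    by (rule sums_mult[OF exp_converges])
  ultimately show ?thesis unfolding heat_def by (simp add: sums_iff)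
qed

lemma heat_const: "heat w m t (\<lambda>z. c) x = c"
  using heat_eigenfunction[of "\<lambda>z. c" 0 t x] by (simp add: lap_const)

lemma heat_add_const: "heat w m t (\<lambda>z. f z + c) x = heat w m t f x + c"
  using heat_lin[of t 1 f c "\<lambda>z. 1" x] heat_const[of t 1 x] by simp

lemma shifted_lap_matrix_nonneg: "0 \<le> shifted_lap_matrix x y"
proof (cases "x = y")
  case True
  then show ?thesis using Deg_le_Deg_max[of x] w_self[of x]
    by (simp add: shifted_lap_matrix_def lap_matrix_def)
next
  case False
  then show ?thesis using w_nonneg[of x y] m_pos[of x]
    by (simp add: shifted_lap_matrix_def lap_matrix_def)
qed

lemma heat_eq_exp_mult_mat_exp_shifted:
  assumes "t \<ge> 0"
  shows "heat w m t f x = exp (- Deg_max w m * t) * mat_exp shifted_lap_matrix t f x"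
proof -
  define c where "c = Deg_max w m"
  have shifted: "mat_app shifted_lap_matrix g x = lap w m g x + c * g x" for g x
  proof -
    have "mat_app shifted_lap_matrix g x
        = mat_app lap_matrix g x + (\<Sum>y\<in>UNIV. (if x = y then c else 0) * g y)"
      unfolding mat_app_def shifted_lap_matrix_def c_def by (simp add: sum.distrib algebra_simps)
    also have "(\<Sum>y\<in>UNIV. (if x = y then c else 0) * g y) = (\<Sum>y\<in>UNIV. if y = x then c * g y else 0)"
      by (rule sum.cong) auto
    finally show ?thesis by (simp add: lap_eq_mat_app)
  qed
  have "mat_exp lap_matrix t f x = exp (- c * t) * mat_exp shifted_lap_matrix t f x"
  proof (rule mat_ode_unique[where u="\<lambda>s. mat_exp lap_matrix s f"
        and v="\<lambda>s x. exp (- c * s) * mat_exp shifted_lap_matrix s f x", OF _ _ _ assms])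
    fix s x
    show "((\<lambda>s. mat_exp lap_matrix s f x) has_field_derivative
        mat_app lap_matrix (mat_exp lap_matrix s f) x) (at s)"
      using mat_exp_has_derivative[of lap_matrix f x s] by (simp add: mat_exp_mat_app)
    have "((\<lambda>s. exp (- c * s) * mat_exp shifted_lap_matrix s f x) has_field_derivative
        (- c * exp (- c * s)) * mat_exp shifted_lap_matrix s f x
          + exp (- c * s) * mat_exp shifted_lap_matrix s (mat_app shifted_lap_matrix f) x) (at s)"
      by (rule derivative_eq_intros mat_exp_has_derivative refl | simp)+
    moreover have "(- c * exp (- c * s)) * mat_exp shifted_lap_matrix s f x
          + exp (- c * s) * mat_exp shifted_lap_matrix s (mat_app shifted_lap_matrix f) x
        = mat_app lap_matrix (\<lambda>x. exp (- c * s) * mat_exp shifted_lap_matrix s f x) x"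
      unfolding mat_exp_mat_app shifted
      using mat_app_lin[of lap_matrix "exp (- c * s)" "mat_exp shifted_lap_matrix s f" 0 "\<lambda>z. 0" x]
      by (simp add: lap_eq_mat_app algebra_simps)
    ultimately show "((\<lambda>s. exp (- c * s) * mat_exp shifted_lap_matrix s f x) has_field_derivative
        mat_app lap_matrix (\<lambda>x. exp (- c * s) * mat_exp shifted_lap_matrix s f x) x) (at s)"
      by simp
  qed (simp add: mat_exp_0)
  then show ?thesis by (simp add: heat_eq_mat_exp c_def)
qed

lemma heat_nonneg:
  assumes "t \<ge> 0" and "\<And>z. 0 \<le> f z"
  shows "0 \<le> heat w m t f x"
  unfolding heat_eq_exp_mult_mat_exp_shifted[OF assms(1)]
  using mat_exp_nonneg[where a=shifted_lap_matrix, OF shifted_lap_matrix_nonneg assms(2,1)] by simp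

lemma heat_le_const:
  assumes "t \<ge> 0" and "\<And>z. f z \<le> c"
  shows "heat w m t f x \<le> c"
  using heat_nonneg[of t "\<lambda>z. c - f z" x] assms heat_diff[of t "\<lambda>_. c" f x] heat_const by simp

lemma heat_isCont: "isCont (\<lambda>r. heat w m r f z) r0"
  by (rule DERIV_isCont[OF heat_has_derivative])

lemma heat_has_derivative_moving:
  assumes "\<And>y. ((\<lambda>s. g s y) has_field_derivative g' y) (at s0)"
  shows "((\<lambda>s. heat w m s (g s) x) has_field_derivative heat w m s0 (\<lambda>y. g' y + lap w m (g s0) y) x) (at s0)"
proof -
  define k where "k s y = heat w m s (\<lambda>z. if z = y then 1 else 0) x" for s y
  define k' where "k' y = heat w m s0 (lap w m (\<lambda>z. if z = y then 1 else 0)) x" for y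
  have "((\<lambda>s. k s y) has_field_derivative k' y) (at s0)" for y
    unfolding k_def k'_def by (rule heat_has_derivative)
  then have "((\<lambda>s. \<Sum>y\<in>UNIV. g s y * k s y) has_field_derivative
      (\<Sum>y\<in>UNIV. g' y * k s0 y + k' y * g s0 y)) (at s0)"
    by (intro DERIV_sum DERIV_mult assms)
  moreover have "(\<lambda>s. heat w m s (g s) x) = (\<lambda>s. \<Sum>y\<in>UNIV. g s y * k s y)"
    unfolding k_def by (rule ext) (rule heat_kernel)
  moreover have "(\<Sum>y\<in>UNIV. k' y * g s0 y) = heat w m s0 (lap w m (g s0)) x"
  proof -
    have "(\<Sum>y\<in>UNIV. k' y * g s0 y)
        = (\<Sum>y\<in>UNIV. g s0 y * (\<Sum>z\<in>UNIV. lap w m (\<lambda>u. if u = y then 1 else 0) z * k s0 z))"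
      unfolding k'_def k_def by (rule sum.cong[OF refl]) (simp add: heat_kernel[of s0 "lap w m _"])
    also have "\<dots> = (\<Sum>z\<in>UNIV. (\<Sum>y\<in>UNIV. g s0 y * lap w m (\<lambda>u. if u = y then 1 else 0) z) * k s0 z)"
      by (simp add: sum_distrib_left sum_distrib_right algebra_simps) (rule sum.swap)
    also have "\<dots> = heat w m s0 (lap w m (g s0)) x"
      unfolding k_def lap_kernel[symmetric] by (rule heat_kernel[symmetric])
    finally show ?thesis .
  qed
  moreover have "(\<Sum>y\<in>UNIV. g' y * k s0 y) = heat w m s0 g' x"
    unfolding k_def by (rule heat_kernel[symmetric])
  ultimately show ?thesis
    using heat_lin[of s0 1 g' 1 "lap w m (g s0)" x] by (simp add: sum.distrib)
qed

end

section \<open>The Bakry--\'Emery gradient estimate\<close>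

context wgraph
begin

lemma Gam_has_derivative:
  assumes "\<And>z. ((\<lambda>s. F s z) has_field_derivative F' z) (at s0)"
  shows "((\<lambda>s. Gam w m (F s) (F s) y) has_field_derivative 2 * Gam w m (F s0) F' y) (at s0)"
proof -
  have "((\<lambda>s. w y z * (F s z - F s y) * (F s z - F s y)) has_field_derivative
      w y z * (2 * ((F s0 z - F s0 y) * (F' z - F' y)))) (at s0)" for z
  proof -
    have d: "((\<lambda>s. F s z - F s y) has_field_derivative F' z - F' y) (at s0)"
      by (rule DERIV_diff[OF assms assms])
    from DERIV_cmult[OF DERIV_mult[OF d d], of "w y z"] show ?thesis
      by (simp add: algebra_simps)
  qed
  then have "((\<lambda>s. (\<Sum>z\<in>UNIV. w y z * (F s z - F s y) * (F s z - F s y)) / (2 * m y))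
      has_field_derivative (\<Sum>z\<in>UNIV. w y z * (2 * ((F s0 z - F s0 y) * (F' z - F' y)))) / (2 * m y)) (at s0)"
    by (intro DERIV_cdivide DERIV_sum)
  moreover have "(\<Sum>z\<in>UNIV. w y z * (2 * ((F s0 z - F s0 y) * (F' z - F' y)))) / (2 * m y)
      = 2 * Gam w m (F s0) F' y"
    unfolding Gam_altdef by (simp add: sum_distrib_left algebra_simps)
  ultimately show ?thesis unfolding Gam_altdef by simp
qed

lemma heat_backward_has_derivative:
  "((\<lambda>s. heat w m (t - s) f z) has_field_derivative - lap w m (heat w m (t - s0) f) z) (at s0)"
proof -
  have "((\<lambda>s. heat w m (t - s) f z) has_field_derivative heat w m (t - s0) (lap w m f) z * (- 1)) (at s0)"
    by (rule DERIV_chain2[OF heat_has_derivative]) (rule derivative_eq_intros refl | simp)+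
  then show ?thesis by (simp add: heat_lap)
qed

text \<open>Interpolates between \<open>\<Gamma>(P\<^sub>t f)\<close> at \<open>s = 0\<close> and \<open>e\<^sup>-\<^sup>2\<^sup>K\<^sup>t P\<^sub>t \<Gamma> f\<close> at \<open>s = t\<close>;
  its derivative is \<open>2 e\<^sup>-\<^sup>2\<^sup>K\<^sup>s P\<^sub>s (\<Gamma>\<^sub>2 - K\<Gamma>)(P\<^sub>t\<^sub>-\<^sub>s f)\<close>.\<close>
definition gradient_interpolation :: "real \<Rightarrow> real \<Rightarrow> ('a \<Rightarrow> real) \<Rightarrow> real \<Rightarrow> 'a \<Rightarrow> real" where
  "gradient_interpolation K t f s x =
     exp (- 2 * K * s) * heat w m s (Gam w m (heat w m (t - s) f) (heat w m (t - s) f)) x"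

lemma gradient_interpolation_has_derivative:
  fixes K t r :: real and f :: "'a \<Rightarrow> real"
  defines "u \<equiv> heat w m (t - r) f"
  shows "((\<lambda>s. gradient_interpolation K t f s x) has_field_derivative
     exp (- 2 * K * r) * heat w m r (\<lambda>y. 2 * (Gam2 w m u u y - K * Gam w m u u y)) x) (at r)"
proof -
  have "((\<lambda>s. heat w m s (Gam w m (heat w m (t - s) f) (heat w m (t - s) f)) x) has_field_derivative
      heat w m r (\<lambda>y. 2 * Gam w m u (\<lambda>z. - lap w m u z) y + lap w m (Gam w m u u) y) x) (at r)"
    unfolding u_def
    by (intro heat_has_derivative_moving Gam_has_derivative heat_backward_has_derivative)
  moreover have "(\<lambda>y. 2 * Gam w m u (\<lambda>z. - lap w m u z) y + lap w m (Gam w m u u) y)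
      = (\<lambda>y. 2 * Gam2 w m u u y)"
    using Gam_cmult_right[of u "-1" "lap w m u"] unfolding Gam2_def by (simp add: fun_eq_iff)
  ultimately have "((\<lambda>s. gradient_interpolation K t f s x) has_field_derivative
      (- 2 * K) * exp (- 2 * K * r) * heat w m r (Gam w m u u) x
        + heat w m r (\<lambda>y. 2 * Gam2 w m u u y) x * exp (- 2 * K * r)) (at r)"
    unfolding gradient_interpolation_def u_def
    by (intro DERIV_mult) (rule derivative_eq_intros refl | simp)+
  moreover have "(- 2 * K) * exp (- 2 * K * r) * heat w m r (Gam w m u u) x
        + heat w m r (\<lambda>y. 2 * Gam2 w m u u y) x * exp (- 2 * K * r)
      = exp (- 2 * K * r) * heat w m r (\<lambda>y. 2 * (Gam2 w m u u y - K * Gam w m u u y)) x"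
  proof -
    have "heat w m r (\<lambda>y. 2 * (Gam2 w m u u y - K * Gam w m u u y)) x
        = 2 * heat w m r (Gam2 w m u u) x + (- 2 * K) * heat w m r (Gam w m u u) x"
      using heat_lin[of r 2 "Gam2 w m u u" "- 2 * K" "Gam w m u u" x] by (simp add: algebra_simps)
    moreover have "heat w m r (\<lambda>y. 2 * Gam2 w m u u y) x = 2 * heat w m r (Gam2 w m u u) x"
      using heat_lin[of r 2 "Gam2 w m u u" 0 "Gam w m u u" x] by simp
    ultimately show ?thesis by (simp only:) (simp add: algebra_simps)
  qed
  ultimately show ?thesis by simp
qed

lemma gradient_interpolation_mono:
  assumes "CD_inf w m K" and "0 \<le> a" and "a \<le> b"
  shows "gradient_interpolation K t f a x \<le> gradient_interpolation K t f b x"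
proof (rule DERIV_nonneg_imp_nondecreasing[OF assms(3)])
  fix s assume "a \<le> s" "s \<le> b"
  define u where "u = heat w m (t - s) f"
  have "0 \<le> 2 * (Gam2 w m u u y - K * Gam w m u u y)" for y
    using assms(1) unfolding CD_inf_def by simp
  then have "0 \<le> heat w m s (\<lambda>y. 2 * (Gam2 w m u u y - K * Gam w m u u y)) x"
    using \<open>a \<le> s\<close> assms(2) by (intro heat_nonneg) auto
  then show "\<exists>y. ((\<lambda>s. gradient_interpolation K t f s x) has_real_derivative y) (at s) \<and> 0 \<le> y"
    using gradient_interpolation_has_derivative[where r=s] unfolding u_def by force
qed

lemma gradient_interpolation_0: "gradient_interpolation K t f 0 x = Gam w m (heat w m t f) (heat w m t f) x"
  unfolding gradient_interpolation_def by (simp add: heat_0)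

lemma gradient_interpolation_end:
  "gradient_interpolation K t f t x = exp (- 2 * K * t) * heat w m t (Gam w m f f) x"
  unfolding gradient_interpolation_def by (simp add: heat_0)

theorem gradient_estimate:
  assumes "CD_inf w m K" and "t \<ge> 0"
  shows "Gam w m (heat w m t f) (heat w m t f) x \<le> exp (- 2 * K * t) * heat w m t (Gam w m f f) x"
  using gradient_interpolation_mono[OF assms(1) order_refl assms(2), of t f x]
  unfolding gradient_interpolation_0 gradient_interpolation_end .

lemma lap_isCont: "(\<And>z. isCont (\<lambda>r. F r z) r0) \<Longrightarrow> isCont (\<lambda>r. lap w m (F r) y) r0"
  unfolding lap_altdef by (intro continuous_intros) (auto simp: m_pos less_imp_neq[symmetric])

lemma Gam_isCont:
  "(\<And>z. isCont (\<lambda>r. F r z) r0) \<Longrightarrow> (\<And>z. isCont (\<lambda>r. G r z) r0) \<Longrightarrow>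
    isCont (\<lambda>r. Gam w m (F r) (G r) y) r0"
  unfolding Gam_altdef by (intro continuous_intros) (auto simp: m_pos less_imp_neq[symmetric])

lemma Gam2_isCont: "(\<And>z. isCont (\<lambda>r. F r z) r0) \<Longrightarrow> isCont (\<lambda>r. Gam2 w m (F r) (F r) y) r0"
  unfolding Gam2_def by (intro continuous_intros lap_isCont Gam_isCont) auto

end

section \<open>Connected graphs\<close>

context wgraph
begin

lemma relpowp_adj_sym: "(adj w ^^ n) x y \<Longrightarrow> (adj w ^^ n) y x"
proof (induction n arbitrary: y)
  case (Suc n)
  from Suc.prems obtain z where "(adj w ^^ n) x z" "adj w z y" by (rule relpowp_Suc_E)
  then show ?case using Suc.IH adj_sym by (metis relpowp_Suc_I2)
qed simp

lemma gdist_le: "(adj w ^^ n) x y \<Longrightarrow> gdist w x y \<le> n"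
  unfolding gdist_def by (rule Least_le)

lemma gdist_self: "gdist w x x = 0"
  using gdist_le[of 0 x x] by simp

end

locale connected_wgraph = wgraph +
  assumes connected: "connected_graph w"
begin

lemma relpowp_gdist: "(adj w ^^ gdist w x y) x y"
  unfolding gdist_def using connected unfolding connected_graph_def by (metis LeastI)

lemma gdist_commute: "gdist w x y = gdist w y x"
  using gdist_le[OF relpowp_adj_sym[OF relpowp_gdist[of y x]]]
    gdist_le[OF relpowp_adj_sym[OF relpowp_gdist[of x y]]] by simp

lemma gdist_eq_0_iff: "gdist w x y = 0 \<longleftrightarrow> x = y"
  using relpowp_gdist[of x y] gdist_self by auto

lemma gdist_adj_le: "adj w x y \<Longrightarrow> gdist w z y \<le> gdist w z x + 1"
  using gdist_le[OF relpowp_Suc_I[OF relpowp_gdist[of z x]]] by simp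

lemma abs_gdist_adj_diff_le: "adj w x y \<Longrightarrow> \<bar>real (gdist w z y) - real (gdist w z x)\<bar> \<le> 1"
  using gdist_adj_le[of x y z] gdist_adj_le[of y x z] adj_sym[of x y] by linarith

lemma gdist_adj_eq_1: "adj w x y \<Longrightarrow> gdist w x y = 1"
  using gdist_le[of 1 x y] gdist_eq_0_iff[of x y] adj_imp_neq[of x y] by fastforce

lemma parity_relpowp:
  assumes "\<And>x y. adj w x y \<Longrightarrow> (x \<in> A \<longleftrightarrow> y \<notin> A)" and "(adj w ^^ n) x y"
  shows "(x \<in> A \<longleftrightarrow> y \<in> A) \<longleftrightarrow> even n"
  using assms(2)
proof (induction n arbitrary: y)
  case (Suc n)
  from Suc.prems obtain z where "(adj w ^^ n) x z" "adj w z y" by (rule relpowp_Suc_E)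
  then show ?case using Suc.IH assms(1) by auto
qed simp

text \<open>Maximum principle: the maximum value propagates along every edge out of a maximum point.\<close>
lemma harmonic_imp_const:
  assumes "\<And>x. lap w m g x = 0"
  shows "g x = g y"
proof -
  define M where "M = Max (range g)"
  have "M \<in> range g" unfolding M_def by (rule Max_in) auto
  then obtain x1 where x1: "g x1 = M" by auto
  have le: "g z \<le> M" for z unfolding M_def by (rule Max_ge) auto
  have "(adj w ^^ n) x1 y \<Longrightarrow> g y = M" for n y
  proof (induction n arbitrary: y)
    case (Suc n)
    then obtain z where z: "(adj w ^^ n) x1 z" "adj w z y" by (auto elim: relpowp_Suc_E)
    have "(\<Sum>u\<in>UNIV. w z u * (M - g u)) = - (m z * lap w m g z)"
      unfolding m_mult_lap Suc.IH[OF z(1), symmetric] sum_negf[symmetric]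
      by (rule sum.cong) (auto simp: algebra_simps)
    then have "(\<Sum>u\<in>UNIV. w z u * (M - g u)) = 0" using assms by simp
    moreover have "\<forall>u\<in>UNIV. 0 \<le> w z u * (M - g u)" using w_nonneg le by simp
    ultimately have "w z y * (M - g y) = 0" by (simp add: sum_nonneg_eq_0_iff)
    then show ?case using z(2) unfolding adj_def by simp
  qed (simp add: x1)
  then show ?thesis using relpowp_gdist by metis
qed

lemma bound_propagates_along_paths:
  fixes u :: "real \<Rightarrow> 'a \<Rightarrow> real" and c :: "'a \<Rightarrow> 'a \<Rightarrow> real" and e :: "real \<Rightarrow> real"
  assumes "\<And>t z y. t \<ge> 0 \<Longrightarrow> adj w z y \<Longrightarrow> \<bar>u t y - u t z\<bar> \<le> c z y * e t"
  shows "\<exists>C. \<forall>t\<ge>0. \<bar>u t y - u t x\<bar> \<le> C * e t"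
proof -
  have "(adj w ^^ n) x y \<Longrightarrow> \<exists>C. \<forall>t\<ge>0. \<bar>u t y - u t x\<bar> \<le> C * e t" for n y
  proof (induction n arbitrary: y)
    case (Suc n)
    then obtain z where z: "(adj w ^^ n) x z" "adj w z y" by (auto elim: relpowp_Suc_E)
    obtain C where C: "\<forall>t\<ge>0. \<bar>u t z - u t x\<bar> \<le> C * e t" using Suc.IH[OF z(1)] by blast
    have "\<bar>u t y - u t x\<bar> \<le> (C + c z y) * e t" if "t \<ge> 0" for t
    proof -
      have "\<bar>u t y - u t x\<bar> \<le> \<bar>u t y - u t z\<bar> + \<bar>u t z - u t x\<bar>" by simp
      also have "\<dots> \<le> c z y * e t + C * e t"
        using C assms[OF that z(2)] that by (intro add_mono) auto
      finally show ?thesis by (simp add: algebra_simps)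
    qed
    then show ?case by blast
  qed (auto intro: exI[of _ 0])
  then show ?thesis using relpowp_gdist by blast
qed

lemma mat_app_pow_shifted_lap_matrix_ge:
  assumes "(adj w ^^ n) x y"
  shows "\<exists>e>0. \<forall>g. (\<forall>z. 0 \<le> g z) \<longrightarrow> e * g y \<le> (mat_app shifted_lap_matrix ^^ n) g x"
  using assms
proof (induction n arbitrary: x)
  case (Suc n)
  from Suc.prems obtain z where z: "adj w x z" "(adj w ^^ n) z y" by (rule relpowp_Suc_E2)
  obtain e where e: "e > 0" "\<forall>g. (\<forall>z. 0 \<le> g z) \<longrightarrow> e * g y \<le> (mat_app shifted_lap_matrix ^^ n) g z"
    using Suc.IH[OF z(2)] by blast
  have pos: "0 < shifted_lap_matrix x z"
    using z(1) adj_imp_neq[OF z(1)] m_pos[of x]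
    unfolding adj_def shifted_lap_matrix_def lap_matrix_def by simp
  show ?case
  proof (intro exI[of _ "shifted_lap_matrix x z * e"] conjI allI impI)
    fix g :: "'a \<Rightarrow> real" assume g: "\<forall>z. 0 \<le> g z"
    have nonneg: "0 \<le> (mat_app shifted_lap_matrix ^^ n) g v" for v
      by (rule mat_app_pow_nonneg) (use shifted_lap_matrix_nonneg g in auto)
    have "shifted_lap_matrix x z * e * g y \<le> shifted_lap_matrix x z * (mat_app shifted_lap_matrix ^^ n) g z"
      using e g pos by (simp add: mult.assoc mult_left_mono)
    also have "\<dots> \<le> mat_app shifted_lap_matrix ((mat_app shifted_lap_matrix ^^ n) g) x"
      using member_le_sum[of z UNIV "\<lambda>v. shifted_lap_matrix x v * (mat_app shifted_lap_matrix ^^ n) g v"]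
        shifted_lap_matrix_nonneg nonneg
      by (simp add: mat_app_def[of _ "(mat_app shifted_lap_matrix ^^ n) g"])
    finally show "shifted_lap_matrix x z * e * g y \<le> (mat_app shifted_lap_matrix ^^ Suc n) g x"
      by simp
  qed (use pos e in simp)
qed (auto intro: exI[of _ 1])

lemma heat_eq_0_imp_eq_0:
  assumes "t > 0" and nonneg: "\<And>z. 0 \<le> h z" and "heat w m t h x = 0"
  shows "h y = 0"
proof -
  have "mat_exp shifted_lap_matrix t h x = 0"
    using assms heat_eq_exp_mult_mat_exp_shifted[of t h x] by simp
  moreover have "0 \<le> (mat_app shifted_lap_matrix ^^ n) h x" for n
    by (rule mat_app_pow_nonneg) (use shifted_lap_matrix_nonneg nonneg in auto)
  ultimately have "\<forall>n. t ^ n / fact n * (mat_app shifted_lap_matrix ^^ n) h x = 0"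
    unfolding mat_exp_def using \<open>t > 0\<close>
    by (subst (asm) suminf_eq_zero_iff[OF summable_mat_exp]) auto
  then have "(mat_app shifted_lap_matrix ^^ gdist w x y) h x = 0" using \<open>t > 0\<close> by simp
  moreover obtain e where "e > 0" "e * h y \<le> (mat_app shifted_lap_matrix ^^ gdist w x y) h x"
    using mat_app_pow_shifted_lap_matrix_ge[OF relpowp_gdist[of x y]] nonneg by blast
  ultimately show ?thesis using nonneg[of y] by (simp add: mult_le_0_iff)
qed

text \<open>Equality in the gradient estimate at a single point forces the interpolation to be
  constant, hence its derivative \<open>P\<^sub>s (\<Gamma>\<^sub>2 - K\<Gamma>)(P\<^sub>t\<^sub>-\<^sub>s f)\<close> to vanish at that point, and strict
  positivity of the heat kernel spreads this to every vertex.\<close>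
lemma gradient_estimate_eq_imp_Gam2_eq:
  assumes "CD_inf w m K" and "0 < s" and "s < t"
    and eq: "Gam w m (heat w m t f) (heat w m t f) x = exp (- 2 * K * t) * heat w m t (Gam w m f f) x"
  defines "u \<equiv> heat w m (t - s) f"
  shows "Gam2 w m u u y = K * Gam w m u u y"
proof -
  have const: "gradient_interpolation K t f r x = gradient_interpolation K t f 0 x" if "0 \<le> r" "r \<le> t" for r
    using gradient_interpolation_mono[OF assms(1) order_refl that(1), where t=t and f=f and x=x]
      gradient_interpolation_mono[OF assms(1) that, where t=t and f=f and x=x] eq
    unfolding gradient_interpolation_0 gradient_interpolation_end by linarith
  have "exp (- 2 * K * s) * heat w m s (\<lambda>y. 2 * (Gam2 w m u u y - K * Gam w m u u y)) x = 0"
    unfolding u_def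
  proof (rule DERIV_local_const[OF gradient_interpolation_has_derivative])
    show "0 < min s (t - s)" using assms(2,3) by simp
    show "\<forall>y. \<bar>s - y\<bar> < min s (t - s) \<longrightarrow> gradient_interpolation K t f s x = gradient_interpolation K t f y x"
    proof (intro allI impI)
      fix y assume "\<bar>s - y\<bar> < min s (t - s)"
      then have "0 \<le> y" "y \<le> t" using assms(2,3) by (auto simp: abs_less_iff)
      then show "gradient_interpolation K t f s x = gradient_interpolation K t f y x"
        using const[of s] const[of y] assms(2,3) by simp
    qed
  qed
  then have "heat w m s (\<lambda>y. 2 * (Gam2 w m u u y - K * Gam w m u u y)) x = 0" by simp
  moreover have "0 \<le> 2 * (Gam2 w m u u z - K * Gam w m u u z)" for z
    using assms(1) unfolding CD_inf_def by simp
  ultimately have "2 * (Gam2 w m u u y - K * Gam w m u u y) = 0"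
    by (rule heat_eq_0_imp_eq_0[OF assms(2), rotated])
  then show ?thesis by simp
qed

theorem Gam2_eq_if_gradient_estimate_eq:
  assumes "CD_inf w m K"
    and "\<And>t. t > 0 \<Longrightarrow> \<exists>x. Gam w m (heat w m t f) (heat w m t f) x
                             = exp (- 2 * K * t) * heat w m t (Gam w m f f) x"
  shows "Gam2 w m f f y = K * Gam w m f f y"
proof -
  define g where "g r = Gam2 w m (heat w m r f) (heat w m r f) y - K * Gam w m (heat w m r f) (heat w m r f) y" for r
  have "g r = 0" if "r > 0" for r
  proof -
    obtain x where "Gam w m (heat w m (2 * r) f) (heat w m (2 * r) f) x
        = exp (- 2 * K * (2 * r)) * heat w m (2 * r) (Gam w m f f) x"
      using assms(2)[of "2 * r"] \<open>r > 0\<close> by auto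
    from gradient_estimate_eq_imp_Gam2_eq[OF assms(1) _ _ this, of r y] \<open>r > 0\<close>
    show ?thesis unfolding g_def by simp
  qed
  moreover have "isCont g 0"
    unfolding g_def by (intro continuous_intros Gam2_isCont Gam_isCont heat_isCont)
  ultimately have "g 0 = 0" by (rule isCont_eq_0_at_0_if_pos_eq_0[rotated])
  then show ?thesis unfolding g_def heat_0 by simp
qed

end

section \<open>The distance function from a root\<close>

locale rooted_wgraph = connected_wgraph w m for w :: "'a::finite \<Rightarrow> 'a \<Rightarrow> real" and m +
  fixes x0 :: 'a
begin

abbreviation f0 :: "'a \<Rightarrow> real" where
  "f0 \<equiv> \<lambda>x. real (gdist w x0 x)"

text \<open>An edge inside a distance sphere around \<open>x0\<close> is flat; bipartiteness and the
  equality \<open>\<Gamma> f0 = Deg / 2\<close> both amount to the absence of flat edges.\<close>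
definition no_flat_edge :: "'a \<Rightarrow> bool" where
  "no_flat_edge x \<longleftrightarrow> (\<forall>y. adj w x y \<longrightarrow> f0 y \<noteq> f0 x)"

lemma abs_dist_adj_diff_le: "adj w x y \<Longrightarrow> \<bar>f0 y - f0 x\<bar> \<le> 1"
  by (rule abs_gdist_adj_diff_le)

lemma no_flat_edge_adj:
  assumes "no_flat_edge x" and "adj w x y"
  shows "f0 y = f0 x + 1 \<or> f0 y = f0 x - 1"
  using assms abs_dist_adj_diff_le[OF assms(2)] unfolding no_flat_edge_def by auto

lemma no_flat_edge_root: "no_flat_edge x0"
  unfolding no_flat_edge_def by (simp add: gdist_self gdist_adj_eq_1)

lemma lap_dist_root: "lap w m f0 x0 = Deg w m x0"
proof -
  have "(\<Sum>y\<in>UNIV. w x0 y * (f0 y - f0 x0)) = (\<Sum>y\<in>UNIV. w x0 y)"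
    using gdist_adj_eq_1[OF adj_if_w_neq_0, of x0] by (intro sum.cong) (auto simp: gdist_self)
  then show ?thesis by (simp add: lap_altdef Deg_altdef)
qed

lemma Deg_minus_Gam_dist:
  "m x * (Deg w m x - 2 * Gam w m f0 f0 x) = (\<Sum>y\<in>UNIV. w x y * (1 - (f0 y - f0 x)\<^sup>2))"
proof -
  have "m x * Deg w m x = (\<Sum>y\<in>UNIV. w x y)" using m_pos[of x] by (simp add: Deg_altdef)
  moreover have "2 * m x * Gam w m f0 f0 x = (\<Sum>y\<in>UNIV. w x y * (f0 y - f0 x) * (f0 y - f0 x))"
    using m_pos[of x] by (simp add: Gam_altdef)
  ultimately show ?thesis
    unfolding right_diff_distrib by (simp add: sum_subtractf[symmetric] algebra_simps power2_eq_square)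
qed

lemma w_mult_one_minus_sq_nonneg: "0 \<le> w x y * (1 - (f0 y - f0 x)\<^sup>2)"
proof (cases "w x y = 0")
  case False
  then have "\<bar>f0 y - f0 x\<bar> \<le> 1" by (intro abs_dist_adj_diff_le adj_if_w_neq_0)
  then show ?thesis using w_nonneg[of x y] by (simp add: abs_square_le_1)
qed simp

lemma Gam_dist_le: "Gam w m f0 f0 x \<le> Deg w m x / 2"
proof -
  have "0 \<le> m x * (Deg w m x - 2 * Gam w m f0 f0 x)"
    unfolding Deg_minus_Gam_dist by (intro sum_nonneg w_mult_one_minus_sq_nonneg)
  then show ?thesis using m_pos[of x] by (simp add: zero_le_mult_iff)
qed

lemma Gam_dist_eq_iff: "Gam w m f0 f0 x = Deg w m x / 2 \<longleftrightarrow> no_flat_edge x"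
proof -
  have "Gam w m f0 f0 x = Deg w m x / 2 \<longleftrightarrow> m x * (Deg w m x - 2 * Gam w m f0 f0 x) = 0"
    using m_pos[of x] by auto
  also have "\<dots> \<longleftrightarrow> (\<Sum>y\<in>UNIV. w x y * (1 - (f0 y - f0 x)\<^sup>2)) = 0"
    unfolding Deg_minus_Gam_dist ..
  also have "\<dots> \<longleftrightarrow> (\<forall>y. w x y * (1 - (f0 y - f0 x)\<^sup>2) = 0)"
    using w_mult_one_minus_sq_nonneg by (simp add: sum_nonneg_eq_0_iff)
  also have "\<dots> \<longleftrightarrow> no_flat_edge x"
  proof -
    have "w x y * (1 - (f0 y - f0 x)\<^sup>2) = 0 \<longleftrightarrow> (adj w x y \<longrightarrow> f0 y \<noteq> f0 x)" for y
    proof (cases "adj w x y")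
      case True
      then have "w x y \<noteq> 0" unfolding adj_def by simp
      moreover have "(f0 y - f0 x)\<^sup>2 = 1 \<longleftrightarrow> f0 y \<noteq> f0 x"
      proof
        assume "f0 y \<noteq> f0 x"
        then have "gdist w x0 y \<noteq> gdist w x0 x" by auto
        then have "f0 y = f0 x + 1 \<or> f0 y = f0 x - 1" using abs_dist_adj_diff_le[OF True] by linarith
        then show "(f0 y - f0 x)\<^sup>2 = 1" by auto
      qed auto
      ultimately show ?thesis using True by auto
    qed (use w_nonneg[of x y] in \<open>auto simp: adj_def\<close>)
    then show ?thesis unfolding no_flat_edge_def by auto
  qed
  finally show ?thesis .
qed

lemma Gam_dist_root: "Gam w m f0 f0 x0 = Deg w m x0 / 2"
  using Gam_dist_eq_iff no_flat_edge_root by blast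

lemma dminus_if_no_flat_edge:
  assumes "no_flat_edge x"
  shows "2 * dminus w m x0 x = Deg w m x - lap w m f0 x"
proof -
  have "dminus w m x0 x = (\<Sum>y\<in>UNIV. if adj w y x \<and> gdist w y x0 < gdist w x x0 then w y x / m x else 0)"
    unfolding dminus_def by (simp add: sum.inter_filter[symmetric])
  also have "\<dots> = (\<Sum>y\<in>UNIV. w x y * (1 - (f0 y - f0 x)) / 2) / m x"
    unfolding sum_divide_distrib
  proof (rule sum.cong[OF refl])
    fix y
    show "(if adj w y x \<and> gdist w y x0 < gdist w x x0 then w y x / m x else 0)
        = w x y * (1 - (f0 y - f0 x)) / 2 / m x"
    proof (cases "adj w x y")
      case True
      then show ?thesis
        using no_flat_edge_adj[OF assms True] adj_sym[of x y] w_sym[of x y]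
          gdist_commute[of y x0] gdist_commute[of x x0] by auto
    qed (use w_nonneg[of x y] adj_sym[of x y] in \<open>auto simp: adj_def\<close>)
  qed
  also have "\<dots> = ((\<Sum>y\<in>UNIV. w x y) - (\<Sum>y\<in>UNIV. w x y * (f0 y - f0 x))) / 2 / m x"
    unfolding sum_subtractf[symmetric] sum_divide_distrib[symmetric] by (simp add: algebra_simps)
  also have "\<dots> = (Deg w m x - lap w m f0 x) / 2"
    using m_pos[of x] by (simp add: Deg_altdef lap_altdef field_simps)
  finally show ?thesis by simp
qed

lemma bipartite_iff_no_flat_edges: "bipartite w \<longleftrightarrow> (\<forall>x. no_flat_edge x)"
proof
  assume "bipartite w"
  then obtain A where A: "\<And>x y. adj w x y \<Longrightarrow> (x \<in> A \<longleftrightarrow> y \<notin> A)"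
    unfolding bipartite_def by blast
  show "\<forall>x. no_flat_edge x"
    unfolding no_flat_edge_def
    using parity_relpowp[OF A relpowp_gdist] A by (metis of_nat_eq_iff)
next
  assume "\<forall>x. no_flat_edge x"
  then have "(x \<in> {x. even (gdist w x0 x)}) \<longleftrightarrow> (y \<notin> {x. even (gdist w x0 x)})" if "adj w x y" for x y
  proof -
    have "gdist w x0 y = gdist w x0 x + 1 \<or> gdist w x0 x = gdist w x0 y + 1"
      using no_flat_edge_adj[OF _ that] \<open>\<forall>x. no_flat_edge x\<close> by fastforce
    then show ?thesis by auto
  qed
  then show "bipartite w" unfolding bipartite_def by blast
qed

lemma HSS_iff:
  assumes "K > 0"
  shows "HSS w m (2 * Deg_max w m / K) (K / 2) x0 \<longleftrightarrow>
    (\<forall>x. Deg w m x = Deg_max w m) \<and> (\<forall>x. no_flat_edge x) \<and>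
    (\<forall>x. lap w m f0 x = Deg_max w m - K * f0 x)"
proof -
  have "2 * Deg_max w m / K * (K / 2) = Deg_max w m" using assms by simp
  moreover have "dminus w m x0 x = K / 2 * real (gdist w x x0) \<longleftrightarrow>
      lap w m f0 x = Deg_max w m - K * f0 x" if "no_flat_edge x" "Deg w m x = Deg_max w m" for x
    using dminus_if_no_flat_edge[OF that(1)] that(2) gdist_commute[of x x0] by auto
  ultimately show ?thesis
    unfolding HSS_def bipartite_iff_no_flat_edges by (auto simp: mult.commute)
qed

end

section \<open>Functions with affine Laplacian\<close>

context wgraph
begin

lemma Gam2_if_lap_affine:
  assumes "\<And>x. lap w m f x = c - K * f x"
  shows "Gam2 w m f f x = lap w m (Gam w m f f) x / 2 + K * Gam w m f f x"
proof -
  have "lap w m f = (\<lambda>z. (- K) * f z + c)" using assms by (auto simp: algebra_simps)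
  then have "Gam w m f (lap w m f) x = Gam w m f (\<lambda>z. (- K) * f z + c) x" by (simp only:)
  also have "\<dots> = - K * Gam w m f f x" by (simp only: Gam_add_const_right Gam_cmult_right)
  finally have "Gam w m f (lap w m f) x = - K * Gam w m f f x" .
  then show ?thesis unfolding Gam2_def by (simp add: field_simps)
qed

lemma Gam_heat_if_lap_affine:
  assumes "K \<noteq> 0" and "\<And>x. lap w m f x = c - K * f x"
  shows "Gam w m (heat w m t f) (heat w m t f) x = exp (- 2 * K * t) * Gam w m f f x"
proof -
  define \<phi> where "\<phi> z = f z - c / K" for z
  have "lap w m \<phi> z = - K * \<phi> z" for z
    using assms unfolding \<phi>_def diff_conv_add_uminus lap_add_const by (simp add: algebra_simps)
  then have "heat w m t f = (\<lambda>z. exp (- K * t) * \<phi> z + c / K)"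
    using heat_add_const[of t \<phi> "c / K"] heat_eigenfunction[of \<phi> "- K" t] by (auto simp: \<phi>_def)
  moreover have "Gam w m \<phi> \<phi> x = Gam w m f f x"
    unfolding \<phi>_def[abs_def] diff_conv_add_uminus by (simp only: Gam_add_const Gam_add_const_right)
  ultimately show ?thesis
    by (simp add: Gam_add_const Gam_add_const_right Gam_cmult Gam_cmult_right mult_exp_exp)
qed

end

context connected_wgraph
begin

lemma Gam2_eq_imp_shifted_eigenfunction:
  assumes "K > 0" and "CD_inf w m K" and "\<And>x. Gam2 w m f f x = K * Gam w m f f x"
  shows "\<exists>\<phi> C. (\<forall>x. f x = \<phi> x + C) \<and> (\<forall>x. - lap w m \<phi> x = K * \<phi> x)"
proof -
  have "lap w m (\<lambda>z. lap w m f z + K * f z) x = 0" for x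
    by (rule CD_equality_imp_lap_lap[OF assms(2,3)])
  then have const: "lap w m f x + K * f x = lap w m f y + K * f y" for x y
    by (rule harmonic_imp_const)
  fix y
  define C where "C = (lap w m f y + K * f y) / K"
  have "lap w m f x = K * C - K * f x" for x
    using const[of x y] assms(1) by (simp add: C_def)
  then have "- lap w m (\<lambda>z. f z + - C) x = K * (f x + - C)" for x
    unfolding lap_add_const by (simp add: algebra_simps)
  then show ?thesis by (intro exI[of _ "\<lambda>z. f z + - C"] exI[of _ C]) auto
qed

lemma Gam_const_if_lap_affine:
  assumes "CD_inf w m K" and "\<And>x. lap w m f x = c - K * f x"
  shows "Gam w m f f x = Gam w m f f y"
proof -
  have "0 \<le> lap w m (Gam w m f f) x" for x
  proof -
    have "K * Gam w m f f x \<le> Gam2 w m f f x" using assms(1) unfolding CD_inf_def by blast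
    then show ?thesis using Gam2_if_lap_affine[OF assms(2), of x] by linarith
  qed
  then have "lap w m (Gam w m f f) x = 0" for x by (rule lap_eq_0_if_nonneg)
  then show ?thesis by (rule harmonic_imp_const)
qed

end

section \<open>Equality in the diameter bound\<close>

context rooted_wgraph
begin

lemma lap_dist_if_shifted_eigenfunction:
  assumes "Deg w m x0 = Deg_max w m"
    and "\<forall>x. f0 x = \<phi> x + C" and "\<forall>x. - lap w m \<phi> x = K * \<phi> x"
  shows "lap w m f0 x = Deg_max w m - K * f0 x"
proof -
  have f0_eq: "f0 = (\<lambda>z. \<phi> z + C)" using assms(2) by auto
  have lap_f0: "lap w m f0 x = - K * (f0 x - C)" for x
    using assms(2,3)[rule_format, of x] unfolding f0_eq lap_add_const by simp
  then have "Deg_max w m = K * C"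
    using lap_f0[of x0] lap_dist_root assms(1) by (simp add: gdist_self)
  then show ?thesis using lap_f0[of x] by (simp add: algebra_simps)
qed

lemma HSS_if_shifted_eigenfunction:
  assumes "K > 0" and "CD_inf w m K" and "Deg w m x0 = Deg_max w m"
    and "\<forall>x. f0 x = \<phi> x + C" and "\<forall>x. - lap w m \<phi> x = K * \<phi> x"
  shows "HSS w m (2 * Deg_max w m / K) (K / 2) x0"
proof -
  have lap_f0: "\<forall>x. lap w m f0 x = Deg_max w m - K * f0 x"
    using lap_dist_if_shifted_eigenfunction[OF assms(3-5)] by blast
  have "Gam w m f0 f0 x = Deg_max w m / 2" for x
    using Gam_const_if_lap_affine[OF assms(2), of f0 "Deg_max w m" x x0] lap_f0 Gam_dist_root assms(3)
    by simp
  then have "Deg w m x = Deg_max w m \<and> no_flat_edge x" for x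
    using Gam_dist_le[of x] Deg_le_Deg_max[of x] Gam_dist_eq_iff[of x] by auto
  then show ?thesis using HSS_iff[OF assms(1)] lap_f0 by blast
qed

lemma far_vertex_if_HSS:
  assumes "K > 0" and "HSS w m (2 * Deg_max w m / K) (K / 2) x0"
  shows "\<exists>y0. f0 y0 = 2 * Deg_max w m / K"
proof -
  note HSS = assms(2)[unfolded HSS_iff[OF assms(1)]]
  define M where "M = Max (range f0)"
  have "M \<in> range f0" unfolding M_def by (rule Max_in) auto
  then obtain y0 where y0: "f0 y0 = M" by auto
  have "w y0 y * (f0 y - f0 y0) = - w y0 y" for y
  proof (cases "w y0 y = 0")
    case False
    then have "adj w y0 y" by (rule adj_if_w_neq_0)
    moreover have "f0 y \<le> f0 y0" unfolding y0 M_def by (rule Max_ge) auto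
    ultimately show ?thesis using no_flat_edge_adj HSS by force
  qed simp
  then have "lap w m f0 y0 = - Deg w m y0"
    by (simp add: lap_altdef Deg_altdef sum_negf)
  then show ?thesis using HSS assms(1) by (intro exI[of _ y0]) (simp add: field_simps)
qed

lemma gradient_estimate_eq_if_HSS:
  assumes "K > 0" and "HSS w m (2 * Deg_max w m / K) (K / 2) x0" and "t \<ge> 0"
  shows "Gam w m (heat w m t f0) (heat w m t f0) x = exp (- 2 * K * t) * heat w m t (Gam w m f0 f0) x"
proof -
  note HSS = assms(2)[unfolded HSS_iff[OF assms(1)]]
  then have "Gam w m f0 f0 = (\<lambda>z. Deg_max w m / 2)"
    using Gam_dist_eq_iff by auto
  then show ?thesis
    using Gam_heat_if_lap_affine[of K f0 "Deg_max w m" t x] HSS assms(1) by (simp add: heat_const)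
qed

lemma heat_Gam_dist_le:
  assumes "t \<ge> 0"
  shows "heat w m t (Gam w m f0 f0) y \<le> Deg_max w m / 2"
proof (rule heat_le_const[OF assms])
  show "Gam w m f0 f0 z \<le> Deg_max w m / 2" for z
    using Gam_dist_le[of z] Deg_le_Deg_max[of z] by linarith
qed

lemma Gam_heat_dist_le:
  assumes "CD_inf w m K" and "t \<ge> 0"
  shows "Gam w m (heat w m t f0) (heat w m t f0) y \<le> exp (- 2 * K * t) * (Deg_max w m / 2)"
proof -
  have "Gam w m (heat w m t f0) (heat w m t f0) y \<le> exp (- 2 * K * t) * heat w m t (Gam w m f0 f0) y"
    by (rule gradient_estimate[OF assms])
  also have "\<dots> \<le> exp (- 2 * K * t) * (Deg_max w m / 2)"
    by (rule mult_left_mono[OF heat_Gam_dist_le[OF assms(2)]]) simp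
  finally show ?thesis .
qed

lemma abs_lap_heat_dist_le:
  assumes "CD_inf w m K" and "t \<ge> 0"
  shows "\<bar>lap w m (heat w m t f0) y\<bar> \<le> Deg_max w m * exp (- K * t)"
proof -
  have "(lap w m (heat w m t f0) y)\<^sup>2 \<le> 2 * Deg w m y * Gam w m (heat w m t f0) (heat w m t f0) y"
    by (rule lap_sq_le_Deg_Gam)
  also have "\<dots> \<le> 2 * Deg_max w m * Gam w m (heat w m t f0) (heat w m t f0) y"
    using Deg_le_Deg_max[of y] Gam_self_nonneg by (simp add: mult_right_mono)
  also have "\<dots> \<le> 2 * Deg_max w m * (exp (- 2 * K * t) * (Deg_max w m / 2))"
    using Deg_max_nonneg by (intro mult_left_mono[OF Gam_heat_dist_le[OF assms]]) simp
  also have "\<dots> = (Deg_max w m * exp (- K * t))\<^sup>2"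
    unfolding exp_neg_double by (simp add: power2_eq_square)
  finally have "\<bar>lap w m (heat w m t f0) y\<bar>\<^sup>2 \<le> (Deg_max w m * exp (- K * t))\<^sup>2" by simp
  then show ?thesis by (rule power2_le_imp_le) (simp add: Deg_max_nonneg)
qed

lemma heat_dist_adj_diff_le:
  assumes "CD_inf w m K" and "t \<ge> 0" and "adj w z v"
  shows "\<bar>heat w m t f0 v - heat w m t f0 z\<bar> \<le> sqrt (m z * Deg_max w m / w z v) * exp (- K * t)"
proof -
  define P where "P = heat w m t f0"
  define q where "q = m z * Deg_max w m / w z v"
  have "0 < w z v" using \<open>adj w z v\<close> unfolding adj_def .
  then have q: "0 \<le> q" unfolding q_def using m_pos[of z] Deg_max_nonneg by simp
  have "w z v * (P v - P z)\<^sup>2 \<le> 2 * m z * Gam w m P P z" by (rule w_mult_diff_sq_le_Gam)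
  also have "\<dots> \<le> 2 * m z * (exp (- 2 * K * t) * (Deg_max w m / 2))"
    using Gam_heat_dist_le[OF assms(1,2), of z] m_pos[of z] unfolding P_def by simp
  finally have "(P v - P z)\<^sup>2 \<le> q * (exp (- K * t))\<^sup>2"
    using \<open>0 < w z v\<close> unfolding q_def exp_neg_double by (simp add: field_simps)
  also have "\<dots> = (sqrt q * exp (- K * t))\<^sup>2" using q by (simp add: power_mult_distrib)
  finally have "\<bar>P v - P z\<bar>\<^sup>2 \<le> (sqrt q * exp (- K * t))\<^sup>2" by simp
  then show ?thesis unfolding P_def q_def[symmetric] by (rule power2_le_imp_le) (simp add: q)
qed

lemma heat_dist_diff_decay:
  assumes "CD_inf w m K"
  shows "\<exists>C. \<forall>t\<ge>0. \<bar>heat w m t f0 y - heat w m t f0 x\<bar> \<le> C * exp (- K * t)"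
  using heat_dist_adj_diff_le[OF assms]
  by (rule bound_propagates_along_paths[where u="\<lambda>t. heat w m t f0"])

lemma heat_dist_gap_has_derivative:
  "((\<lambda>t. heat w m t f0 y - heat w m t f0 x - 2 * Deg_max w m * exp (- K * t) / K) has_field_derivative
     lap w m (heat w m t f0) y - lap w m (heat w m t f0) x + 2 * Deg_max w m * exp (- K * t)) (at t)"
  if "K \<noteq> 0"
  using that unfolding heat_lap[symmetric]
  by (auto intro!: derivative_eq_intros heat_has_derivative simp: field_simps)

text \<open>The gap \<open>P\<^sub>t f0 y0 - P\<^sub>t f0 x0 - 2 D e\<^sup>-\<^sup>K\<^sup>t / K\<close> is non-decreasing (by the Laplacian bound),
  vanishes at \<open>t = 0\<close> and is bounded above by a decaying exponential, so it vanishes identically.\<close>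
lemma heat_dist_far_vertex_diff:
  assumes "K > 0" and "CD_inf w m K" and y0: "f0 y0 = 2 * Deg_max w m / K" and "T \<ge> 0"
  shows "heat w m T f0 y0 - heat w m T f0 x0 = 2 * Deg_max w m * exp (- K * T) / K"
proof -
  define v where "v t = heat w m t f0 y0 - heat w m t f0 x0 - 2 * Deg_max w m * exp (- K * t) / K" for t
  have mono: "v a \<le> v b" if "0 \<le> a" "a \<le> b" for a b
  proof (rule DERIV_nonneg_imp_nondecreasing[OF that(2)])
    fix s assume "a \<le> s" "s \<le> b"
    then have "s \<ge> 0" using that by simp
    then have "0 \<le> lap w m (heat w m s f0) y0 - lap w m (heat w m s f0) x0 + 2 * Deg_max w m * exp (- K * s)"
      using abs_lap_heat_dist_le[OF assms(2), of s y0] abs_lap_heat_dist_le[OF assms(2), of s x0]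
      by (simp add: abs_le_iff)
    then show "\<exists>d. (v has_real_derivative d) (at s) \<and> 0 \<le> d"
      using heat_dist_gap_has_derivative[where K=K and t=s and y=y0 and x=x0] assms(1) unfolding v_def[abs_def]
      by fastforce
  qed
  have "v 0 = 0" unfolding v_def heat_0 using y0 assms(1) by (simp add: gdist_self)
  obtain C where C: "\<forall>t\<ge>0. \<bar>heat w m t f0 y0 - heat w m t f0 x0\<bar> \<le> C * exp (- K * t)"
    using heat_dist_diff_decay[OF assms(2)] by blast
  have "v T \<le> 0"
  proof (rule ccontr)
    assume "\<not> v T \<le> 0"
    then have "\<forall>\<^sub>F s in at_top. C * exp (- K * s) < v T \<and> T \<le> s"
      using exp_neg_mult_tendsto_0[OF assms(1), of C]
      by (intro eventually_conj order_tendstoD(2) eventually_ge_at_top) auto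
    then obtain N where N: "C * exp (- K * N) < v T" "T \<le> N"
      by (auto simp: eventually_at_top_linorder)
    have "v T \<le> v N" using mono[OF \<open>T \<ge> 0\<close> N(2)] .
    also have "\<dots> \<le> heat w m N f0 y0 - heat w m N f0 x0"
      unfolding v_def using assms(1) Deg_max_nonneg by simp
    also have "\<dots> \<le> C * exp (- K * N)" using C[rule_format, of N] N(2) \<open>T \<ge> 0\<close> by simp
    finally show False using N(1) by simp
  qed
  then show ?thesis using mono[OF order_refl \<open>T \<ge> 0\<close>] \<open>v 0 = 0\<close> unfolding v_def by simp
qed

lemma lap_heat_dist_root:
  assumes "K > 0" and "CD_inf w m K" and y0: "f0 y0 = 2 * Deg_max w m / K" and "t > 0"
  shows "lap w m (heat w m t f0) x0 = Deg_max w m * exp (- K * t)"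
proof -
  have "lap w m (heat w m t f0) y0 - lap w m (heat w m t f0) x0 + 2 * Deg_max w m * exp (- K * t) = 0"
  proof (rule DERIV_local_const[OF heat_dist_gap_has_derivative \<open>t > 0\<close>])
    show "K \<noteq> 0" using assms(1) by simp
    show "\<forall>s. \<bar>t - s\<bar> < t \<longrightarrow>
      heat w m t f0 y0 - heat w m t f0 x0 - 2 * Deg_max w m * exp (- K * t) / K =
      heat w m s f0 y0 - heat w m s f0 x0 - 2 * Deg_max w m * exp (- K * s) / K"
      using heat_dist_far_vertex_diff[OF assms(1-3)] \<open>t > 0\<close> by (auto simp: abs_less_iff)
  qed
  then show ?thesis
    using abs_lap_heat_dist_le[OF assms(2), of t y0] abs_lap_heat_dist_le[OF assms(2), of t x0] \<open>t > 0\<close>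
    by (simp add: abs_le_iff)
qed

text \<open>At the root the chain \<open>(D e\<^sup>-\<^sup>K\<^sup>t)\<^sup>2 = (\<Delta> P\<^sub>t f0)\<^sup>2 \<le> 2 Deg \<Gamma>(P\<^sub>t f0) \<le> 2 D e\<^sup>-\<^sup>2\<^sup>K\<^sup>t P\<^sub>t \<Gamma> f0 \<le> D\<^sup>2 e\<^sup>-\<^sup>2\<^sup>K\<^sup>t\<close>
  is tight, which forces both \<open>Deg x0 = D\<close> and equality in the gradient estimate.\<close>
lemma gradient_estimate_eq_at_root:
  assumes "K > 0" and "CD_inf w m K" and y0: "f0 y0 = 2 * Deg_max w m / K" and "t > 0"
    and "Deg_max w m > 0"
  shows "Deg w m x0 = Deg_max w m \<and>
    Gam w m (heat w m t f0) (heat w m t f0) x0 = exp (- 2 * K * t) * heat w m t (Gam w m f0 f0) x0"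
proof -
  define D G H e where "D = Deg_max w m" and "G = Gam w m (heat w m t f0) (heat w m t f0) x0"
    and "H = heat w m t (Gam w m f0 f0) x0" and "e = exp (- K * t)"
  have "0 < D" "0 < e" "0 \<le> G" using assms(5) Gam_self_nonneg by (simp_all add: D_def e_def G_def)
  have c1: "(D * e)\<^sup>2 \<le> 2 * Deg w m x0 * G"
    using lap_sq_le_Deg_Gam[of "heat w m t f0" x0] lap_heat_dist_root[OF assms(1-4)]
    by (simp add: D_def e_def G_def)
  have c2: "Deg w m x0 \<le> D" using Deg_le_Deg_max by (simp add: D_def)
  have c3: "G \<le> e\<^sup>2 * H"
    using gradient_estimate[OF assms(2), of t f0 x0] \<open>t > 0\<close> unfolding G_def H_def e_def exp_neg_double
    by simp
  have c4: "H \<le> D / 2"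
    using heat_Gam_dist_le \<open>t > 0\<close> unfolding H_def D_def by simp
  have "2 * Deg w m x0 * G \<le> 2 * D * G" using c2 \<open>0 \<le> G\<close> by (simp add: mult_right_mono)
  moreover have "2 * D * G \<le> 2 * D * (e\<^sup>2 * H)" using c3 \<open>0 < D\<close> by simp
  moreover have "2 * D * (e\<^sup>2 * H) \<le> (D * e)\<^sup>2"
    using mult_left_mono[OF c4, of "2 * D * e\<^sup>2"] \<open>0 < D\<close> by (simp add: power2_eq_square algebra_simps)
  ultimately have tight: "2 * Deg w m x0 * G = 2 * D * G" "2 * D * G = 2 * D * (e\<^sup>2 * H)"
    "2 * D * G = (D * e)\<^sup>2"
    using c1 by linarith+
  then have "0 < G" using \<open>0 < D\<close> \<open>0 < e\<close> by (simp add: power2_eq_square)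
  then have "Deg w m x0 = D" using tight(1) by simp
  moreover have "G = e\<^sup>2 * H" using tight(2) \<open>0 < D\<close> by simp
  ultimately show ?thesis unfolding D_def G_def H_def e_def exp_neg_double by simp
qed

theorem Gam2_dist_eq_if_far_vertex:
  assumes "K > 0" and "CD_inf w m K" and "f0 y0 = 2 * Deg_max w m / K"
  shows "Deg w m x0 = Deg_max w m \<and> (\<forall>x. Gam2 w m f0 f0 x = K * Gam w m f0 f0 x)"
proof (cases "Deg_max w m = 0")
  case True
  then show ?thesis
    using Deg_le_Deg_max[of x0] Deg_nonneg[of x0]
    by (simp add: Gam2_def Gam_def Deg_max_eq_0_imp_lap_eq_0)
next
  case False
  then have "Deg_max w m > 0" using Deg_max_nonneg by linarith
  with gradient_estimate_eq_at_root[OF assms] show ?thesis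
    by (meson Gam2_eq_if_gradient_estimate_eq[OF assms(2)] zero_less_one)
qed

end

theorem theorem4:
  fixes w :: "'a::finite \<Rightarrow> 'a \<Rightarrow> real" and m :: "'a \<Rightarrow> real"
    and K :: real and x0 :: 'a
  assumes "weighted_graph w m" and "connected_graph w"
    and "K > 0" and "CD_inf w m K"
  defines "D \<equiv> Deg_max w m"
    and "f0 \<equiv> (\<lambda>x. real (gdist w x0 x))"
  shows "((\<exists>y0. real (gdist w x0 y0) = 2 * D / K)
          \<longleftrightarrow> (Deg w m x0 = D \<and>
               (\<forall>t\<ge>0. \<forall>x. Gam w m (heat w m t f0) (heat w m t f0) x
                          = exp (- 2 * K * t) * heat w m t (Gam w m f0 f0) x)))
       \<and> ((Deg w m x0 = D \<and>
               (\<forall>t\<ge>0. \<forall>x. Gam w m (heat w m t f0) (heat w m t f0) x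
                          = exp (- 2 * K * t) * heat w m t (Gam w m f0 f0) x))
          \<longleftrightarrow> (Deg w m x0 = D \<and> (\<forall>x. Gam2 w m f0 f0 x = K * Gam w m f0 f0 x)))
       \<and> ((Deg w m x0 = D \<and> (\<forall>x. Gam2 w m f0 f0 x = K * Gam w m f0 f0 x))
          \<longleftrightarrow> (Deg w m x0 = D \<and>
               (\<exists>\<phi> C. (\<forall>x. f0 x = \<phi> x + C) \<and> (\<forall>x. - lap w m \<phi> x = K * \<phi> x))))
       \<and> ((Deg w m x0 = D \<and>
               (\<exists>\<phi> C. (\<forall>x. f0 x = \<phi> x + C) \<and> (\<forall>x. - lap w m \<phi> x = K * \<phi> x)))
          \<longleftrightarrow> HSS w m (2 * D / K) (K / 2) x0)"
proof -
  interpret rooted_wgraph w m x0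
    using assms(1,2) by unfold_locales
  note K = \<open>K > 0\<close> and CD = \<open>CD_inf w m K\<close>
  have S2_imp_Gam2: "Gam2 w m f0 f0 x = K * Gam w m f0 f0 x"
    if "\<forall>t\<ge>0. \<forall>x. Gam w m (heat w m t f0) (heat w m t f0) x
                    = exp (- 2 * K * t) * heat w m t (Gam w m f0 f0) x" for x
    using Gam2_eq_if_gradient_estimate_eq[OF CD] that by (meson less_imp_le)
  show ?thesis
    unfolding D_def f0_def
    using Gam2_dist_eq_if_far_vertex[OF K CD] S2_imp_Gam2[unfolded f0_def]
      Gam2_eq_imp_shifted_eigenfunction[OF K CD] HSS_if_shifted_eigenfunction[OF K CD]
      far_vertex_if_HSS[OF K] gradient_estimate_eq_if_HSS[OF K] HSS_iff[OF K]
    by blast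
qed

end
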